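(* Consider the MTGC algorithm described in the context. Suppose (A1) every $F_i$ is differentiable and $L$-smooth; (A2) stochastic gradients are unbiased with variance at most $\sigma^2$; and $\gamma\le\frac{1}{2HL}$. Then for every global round $t$, $$\mathbb E f(\bar{\boldsymbol x}^{t+1})\le\mathbb Ef(\bar{\boldsymbol x}^t)-\frac{\gamma H}{2}\sum_{e=0}^{E-1}\mathbb E\|\nabla f(\hat{\boldsymbol x}^{t,e})\|^2+\gamma L^2H(Q_t+D_t)+\gamma^2LEH\frac{1}{N^2}\sum_{j=1}^N\frac1{n_j}\sigma^2.$$
   Context: Setting: $N$ groups; group $j$ has a set $\mathcal C_j$ of $n_j\ge1$ clients, sets pairwise disjoint. Client $i$ has distribution $\mathcal D_i$, stochastic loss $F_i(\boldsymbol x,\xi)$, $F_i(\boldsymbol x)=\mathbb E_{\xi\sim\mathcal D_i}F_i(\boldsymbol x,\xi)$; $f_j=\frac1{n_j}\sum_{i\in\mathcal C_j}F_i$, $f=\frac1N\sum_jf_j$. For client $i$, $j$ denotes its group. (A1): $\|\nabla F_i(\boldsymbol x)-\nabla F_i(\boldsymbol y)\|\le L\|\boldsymbol x-\boldsymbol y\|$ for all $\boldsymbol x,\boldsymbol y,i$. (A2): $\mathbb E_{\xi\sim\mathcal D_i}\nabla F_i(\boldsymbol x,\xi)=\nabla F_i(\boldsymbol x)$ and $\mathbb E_{\xi\sim\mathcal D_i}\|\nabla F_i(\boldsymbol x,\xi)-\nabla F_i(\boldsymbol x)\|^2\le\sigma^2$ for all $\boldsymbol x,i$. MTGC: initial $\bar{\boldsymbol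 x}^0$, integers $E,H\ge1$, $\gamma>0$; samples $\xi_{i,h}^{t,e}\sim\mathcal D_i$ fresh and independent of the past. $\boldsymbol y_j^0=-\frac1{n_j}\sum_{i\in\mathcal C_j}\nabla F_i(\bar{\boldsymbol x}^0,\xi_{i,0}^{0,0})+\frac1N\sum_{j'}\frac1{n_{j'}}\sum_{i\in\mathcal C_{j'}}\nabla F_i(\bar{\boldsymbol x}^0,\xi_{i,0}^{0,0})$. For each $t\ge0$: $\bar{\boldsymbol x}_j^{t,0}=\bar{\boldsymbol x}^t$; $\boldsymbol z_i^{t,0}=-\nabla F_i(\bar{\boldsymbol x}^t,\xi_{i,0}^{t,0})+\frac1{n_j}\sum_{i'\in\mathcal C_j}\nabla F_{i'}(\bar{\boldsymbol x}^t,\xi_{i',0}^{t,0})$; for $e=0,\dots,E-1$: $\boldsymbol x_{i,0}^{t,e}=\bar{\boldsymbol x}_j^{t,e}$, $\boldsymbol x_{i,h+1}^{t,e}=\boldsymbol x_{i,h}^{t,e}-\gamma(\nabla F_i(\boldsymbol x_{i,h}^{t,e},\xi_{i,h}^{t,e})+\boldsymbol z_i^{t,e}+\boldsymbol y_j^t)$ for $h=0,\dots,H-1$, $\bar{\boldsymbol x}_j^{t,e+1}=\frac1{n_j}\sum_{i\in\mathcal C_j}\boldsymbol x_{i,H}^{t,e}$, $\boldsymbol z_i^{t,e+1}=\boldsymbol z_i^{t,e}+\frac1{H\gamma}(\boldsymbol x_{i,H}^{t,e}-\bar{\boldsymbol x}_j^{t,e+1})$; then $\bar{\boldsymbol x}^{t+1}=\frac1N\sum_j\bar{\boldsymbol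 x}_j^{t,E}$, $\boldsymbol y_j^{t+1}=\boldsymbol y_j^t+\frac1{HE\gamma}(\bar{\boldsymbol x}_j^{t,E}-\bar{\boldsymbol x}^{t+1})$. $\mathbb E$ is over all randomness. Notation: $\hat{\boldsymbol x}^{t,e}=\frac1N\sum_{j=1}^N\bar{\boldsymbol x}_j^{t,e}$; $D_t=\sum_{e=0}^{E-1}\frac1N\sum_{j=1}^N\mathbb E\|\hat{\boldsymbol x}^{t,e}-\bar{\boldsymbol x}_j^{t,e}\|^2$; $Q_t=\sum_{e=0}^{E-1}\frac{1}{NH}\sum_{j=1}^N\frac1{n_j}\sum_{i\in\mathcal C_j}\sum_{h=0}^{H-1}\mathbb E\|\bar{\boldsymbol x}_j^{t,e}-\boldsymbol x_{i,h}^{t,e}\|^2$. *)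

theory Defs
  imports "HOL-Probability.Probability"
begin

text \<open>Groups are indexed by j < N; group j has client set C j. Clients live in a type 'c.\<close>

definition grp :: "(nat \<Rightarrow> 'c set) \<Rightarrow> nat \<Rightarrow> 'c \<Rightarrow> nat" where
  "grp C N i = (THE j. j < N \<and> i \<in> C j)"

definition avgC :: "(nat \<Rightarrow> 'c set) \<Rightarrow> nat \<Rightarrow> ('c \<Rightarrow> 'a::real_vector) \<Rightarrow> 'a" where
  "avgC C j g = (1 / real (card (C j))) *\<^sub>R (\<Sum>i\<in>C j. g i)"

definition avgN :: "nat \<Rightarrow> (nat \<Rightarrow> 'a::real_vector) \<Rightarrow> 'a" where
  "avgN N g = (1 / real N) *\<^sub>R (\<Sum>j<N. g j)"

definition fglob :: "(nat \<Rightarrow> 'c set) \<Rightarrow> nat \<Rightarrow> ('c \<Rightarrow> 'a \<Rightarrow> real) \<Rightarrow> 'a \<Rightarrow> real" where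
  "fglob C N F x = avgN N (\<lambda>j. avgC C j (\<lambda>i. F i x))"

definition gradglob :: "(nat \<Rightarrow> 'c set) \<Rightarrow> nat \<Rightarrow> ('c \<Rightarrow> 'a \<Rightarrow> 'a::real_vector) \<Rightarrow> 'a \<Rightarrow> 'a" where
  "gradglob C N gF x = avgN N (\<lambda>j. avgC C j (\<lambda>i. gF i x))"

text \<open>Local steps of client i: sm h is the sample xi_{i,h}; x = start point, z, y = corrections.\<close>
primrec mtgc_local :: "('c \<Rightarrow> 'a::real_vector \<Rightarrow> 's \<Rightarrow> 'a) \<Rightarrow> real \<Rightarrow> 'c \<Rightarrow> (nat \<Rightarrow> 's)
    \<Rightarrow> 'a \<Rightarrow> 'a \<Rightarrow> 'a \<Rightarrow> nat \<Rightarrow> 'a" where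
  "mtgc_local G \<gamma> i sm x z y 0 = x"
| "mtgc_local G \<gamma> i sm x z y (Suc h) =
     mtgc_local G \<gamma> i sm x z y h - \<gamma> *\<^sub>R (G i (mtgc_local G \<gamma> i sm x z y h) (sm h) + z + y)"

text \<open>Group rounds e within global round t; st e i h is the sample xi^{t,e}_{i,h};
  xb0 = global iterate at round t, y = the y_j^t. Returns (group iterates, z_i) at stage e.\<close>
primrec mtgc_inner :: "('c \<Rightarrow> 'a::real_vector \<Rightarrow> 's \<Rightarrow> 'a) \<Rightarrow> (nat \<Rightarrow> 'c set) \<Rightarrow> nat \<Rightarrow> real \<Rightarrow> nat
    \<Rightarrow> (nat \<Rightarrow> 'c \<Rightarrow> nat \<Rightarrow> 's) \<Rightarrow> 'a \<Rightarrow> (nat \<Rightarrow> 'a) \<Rightarrow> nat \<Rightarrow> (nat \<Rightarrow> 'a) \<times> ('c \<Rightarrow> 'a)" where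
  "mtgc_inner G C N \<gamma> H st xb0 y 0 =
     ((\<lambda>j. xb0),
      (\<lambda>i. - G i xb0 (st 0 i 0) + avgC C (grp C N i) (\<lambda>i'. G i' xb0 (st 0 i' 0))))"
| "mtgc_inner G C N \<gamma> H st xb0 y (Suc e) =
     (let xb = fst (mtgc_inner G C N \<gamma> H st xb0 y e);
          z = snd (mtgc_inner G C N \<gamma> H st xb0 y e);
          xH = (\<lambda>i. mtgc_local G \<gamma> i (st e i) (xb (grp C N i)) (z i) (y (grp C N i)) H);
          xb' = (\<lambda>j. avgC C j xH)
      in (xb', (\<lambda>i. z i + (1 / (real H * \<gamma>)) *\<^sub>R (xH i - xb' (grp C N i)))))"

text \<open>Global rounds: returns (global iterate bar x^t, (y_j^t)_j). s t e i h is xi^{t,e}_{i,h}.\<close>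
primrec mtgc_outer :: "('c \<Rightarrow> 'a::real_vector \<Rightarrow> 's \<Rightarrow> 'a) \<Rightarrow> (nat \<Rightarrow> 'c set) \<Rightarrow> nat \<Rightarrow> real \<Rightarrow> nat \<Rightarrow> nat
    \<Rightarrow> 'a \<Rightarrow> (nat \<Rightarrow> nat \<Rightarrow> 'c \<Rightarrow> nat \<Rightarrow> 's) \<Rightarrow> nat \<Rightarrow> 'a \<times> (nat \<Rightarrow> 'a)" where
  "mtgc_outer G C N \<gamma> H E x0 s 0 =
     (x0, (\<lambda>j. - avgC C j (\<lambda>i. G i x0 (s 0 0 i 0))
              + avgN N (\<lambda>j'. avgC C j' (\<lambda>i. G i x0 (s 0 0 i 0)))))"
| "mtgc_outer G C N \<gamma> H E x0 s (Suc t) =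
     (let xb = fst (mtgc_outer G C N \<gamma> H E x0 s t);
          y = snd (mtgc_outer G C N \<gamma> H E x0 s t);
          xbE = fst (mtgc_inner G C N \<gamma> H (s t) xb y E);
          xn = avgN N xbE
      in (xn, (\<lambda>j. y j + (1 / (real H * real E * \<gamma>)) *\<^sub>R (xbE j - xn))))"

definition xbar where "xbar G C N \<gamma> H E x0 s t = fst (mtgc_outer G C N \<gamma> H E x0 s t)"
definition ybar where "ybar G C N \<gamma> H E x0 s t = snd (mtgc_outer G C N \<gamma> H E x0 s t)"
definition xbarj where "xbarj G C N \<gamma> H E x0 s t e j =
  fst (mtgc_inner G C N \<gamma> H (s t) (xbar G C N \<gamma> H E x0 s t) (ybar G C N \<gamma> H E x0 s t) e) j"
definition zz where "zz G C N \<gamma> H E x0 s t e i =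
  snd (mtgc_inner G C N \<gamma> H (s t) (xbar G C N \<gamma> H E x0 s t) (ybar G C N \<gamma> H E x0 s t) e) i"
definition xloc where "xloc G C N \<gamma> H E x0 s t e i h =
  mtgc_local G \<gamma> i (s t e i) (xbarj G C N \<gamma> H E x0 s t e (grp C N i)) (zz G C N \<gamma> H E x0 s t e i)
    (ybar G C N \<gamma> H E x0 s t (grp C N i)) h"
definition xhat where "xhat G C N \<gamma> H E x0 s t e = avgN N (\<lambda>j. xbarj G C N \<gamma> H E x0 s t e j)"

definition spath :: "(nat \<Rightarrow> nat \<Rightarrow> 'c \<Rightarrow> nat \<Rightarrow> 'm \<Rightarrow> 's) \<Rightarrow> 'm \<Rightarrow> nat \<Rightarrow> nat \<Rightarrow> 'c \<Rightarrow> nat \<Rightarrow> 's" where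
  "spath \<xi> \<omega> = (\<lambda>t e i h. \<xi> t e i h \<omega>)"

definition Dt where "Dt G C N \<gamma> H E x0 M \<xi> t =
  (\<Sum>e<E. (1 / real N) * (\<Sum>j<N.
     (\<integral>\<omega>. (norm (xhat G C N \<gamma> H E x0 (spath \<xi> \<omega>) t e - xbarj G C N \<gamma> H E x0 (spath \<xi> \<omega>) t e j))\<^sup>2 \<partial>M)))"

definition Qt where "Qt G C N \<gamma> H E x0 M \<xi> t =
  (\<Sum>e<E. (1 / (real N * real H)) * (\<Sum>j<N. (1 / real (card (C j))) * (\<Sum>i\<in>C j. \<Sum>h<H.
     (\<integral>\<omega>. (norm (xbarj G C N \<gamma> H E x0 (spath \<xi> \<omega>) t e j - xloc G C N \<gamma> H E x0 (spath \<xi> \<omega>) t e i h))\<^sup>2 \<partial>M))))"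

end

(*
  The corrections z_i and y_j average to zero within each group and over the groups, so the
  virtual iterate xhat^{t,e}, the mean of the group iterates, moves by -gamma times the sum over
  the local steps of the averaged stochastic gradients. Applying the descent lemma of the
  L-smooth f to this step, the averaged stochastic gradient splits into the averaged true
  gradient at the local iterates and a noise term. By L-smoothness the former differs from
  grad f(xhat) by an amount controlled by the deviations D_t and Q_t, and the step-size
  condition 2 H L gamma <= 1 absorbs its contribution to the quadratic term. Each noise summand
  has zero mean given all earlier samples and variance at most sigma^2, so in expectation the
  cross term with grad f(xhat) vanishes and the squared noise is the weighted sum of the
  variances. Expectations are computed on the finite product of the sample distributions of
  rounds 0..t, which by independence is the joint law of the samples.
*)

theory Submission
  imports Defs
begin

section \<open>Smooth functions and averages\<close>

lemma lipschitz_gradient_descent: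
  fixes F :: "'a::real_inner \<Rightarrow> real" and g :: "'a \<Rightarrow> 'a"
  assumes deriv: "\<And>x. GDERIV F x :> g x"
    and lip: "\<And>x y. norm (g x - g y) \<le> L * norm (x - y)"
  shows "F y \<le> F x + inner (g x) (y - x) + L / 2 * (norm (y - x))\<^sup>2"
proof -
  define d where "d = y - x"
  define \<phi> where "\<phi> s = F (x + s *\<^sub>R d) - s * inner (g x) d - L / 2 * s\<^sup>2 * (norm d)\<^sup>2" for s :: real
  have \<phi>_deriv: "DERIV \<phi> s :> inner d (g (x + s *\<^sub>R d)) - inner (g x) d - L * s * (norm d)\<^sup>2" for s
  proof -
    have line: "((\<lambda>s. x + s *\<^sub>R d) has_derivative (\<lambda>h. h *\<^sub>R d)) (at s)"
      by (auto intro!: derivative_eq_intros)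
    have "(F has_derivative (\<lambda>h. inner h (g (x + s *\<^sub>R d)))) (at (x + s *\<^sub>R d))"
      using deriv[of "x + s *\<^sub>R d"] by (simp add: gderiv_def)
    from has_derivative_compose[OF line this]
    have "((\<lambda>s. F (x + s *\<^sub>R d)) has_derivative (\<lambda>h. inner (h *\<^sub>R d) (g (x + s *\<^sub>R d)))) (at s)"
      by (simp add: o_def)
    then have "DERIV (\<lambda>s. F (x + s *\<^sub>R d)) s :> inner d (g (x + s *\<^sub>R d))"
      by (simp add: has_field_derivative_def mult.commute[of _ "inner d _"])
    then show ?thesis unfolding \<phi>_def
      by (auto intro!: derivative_eq_intros simp: power2_eq_square)
  qed
  have "\<phi> 1 \<le> \<phi> 0"
  proof (rule DERIV_nonpos_imp_nonincreasing[of 0 1 \<phi>])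
    fix s :: real assume s: "0 \<le> s" "s \<le> 1"
    have "inner d (g (x + s *\<^sub>R d)) - inner (g x) d = inner d (g (x + s *\<^sub>R d) - g x)"
      by (simp add: inner_diff_right inner_commute)
    also have "\<dots> \<le> norm d * norm (g (x + s *\<^sub>R d) - g x)"
      by (rule Cauchy_Schwarz_ineq2[THEN order_trans[OF abs_ge_self]])
    also have "\<dots> \<le> norm d * (L * norm (s *\<^sub>R d))"
      using lip[of "x + s *\<^sub>R d" x] by (intro mult_left_mono) auto
    also have "\<dots> = L * s * (norm d)\<^sup>2" using s by (simp add: power2_eq_square)
    finally show "\<exists>y. DERIV \<phi> s :> y \<and> y \<le> 0" using \<phi>_deriv[of s] by auto
  qed simp
  then show ?thesis unfolding \<phi>_def d_def by (simp add: algebra_simps)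
qed

lemma lipschitz_constant_nonneg:
  fixes g :: "'a::euclidean_space \<Rightarrow> 'b::real_normed_vector"
  assumes "\<And>x y. norm (g x - g y) \<le> L * norm (x - y)"
  shows "0 \<le> L"
proof -
  obtain b :: 'a where "b \<in> Basis" using nonempty_Basis by blast
  then have "b \<noteq> 0" by auto
  have "0 \<le> norm (g b - g 0)" by simp
  also have "\<dots> \<le> L * norm b" using assms[of b 0] by simp
  finally show ?thesis using \<open>b \<noteq> 0\<close> by (simp add: zero_le_mult_iff)
qed

lemma norm_add_squared_le:
  fixes x y :: "'a::real_normed_vector"
  shows "(norm (x + y))\<^sup>2 \<le> 2 * (norm x)\<^sup>2 + 2 * (norm y)\<^sup>2"
proof -
  have "(norm (x + y))\<^sup>2 \<le> (norm x + norm y)\<^sup>2" by (intro power_mono norm_triangle_ineq) auto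
  also have "\<dots> \<le> 2 * (norm x)\<^sup>2 + 2 * (norm y)\<^sup>2"
    using sum_squares_bound[of "norm x" "norm y"] by (simp add: power2_sum)
  finally show ?thesis .
qed

lemma lipschitz_squared_growth:
  fixes g :: "'a::real_normed_vector \<Rightarrow> 'b::real_normed_vector"
  assumes "\<And>x y. norm (g x - g y) \<le> L * norm (x - y)"
  shows "(norm (g x))\<^sup>2 \<le> 2 * (norm (g 0))\<^sup>2 + 2 * L\<^sup>2 * (norm x)\<^sup>2"
proof -
  have "(norm (g x))\<^sup>2 = (norm ((g x - g 0) + g 0))\<^sup>2" by simp
  also have "\<dots> \<le> 2 * (norm (g x - g 0))\<^sup>2 + 2 * (norm (g 0))\<^sup>2" by (rule norm_add_squared_le)
  also have "(norm (g x - g 0))\<^sup>2 \<le> (L * norm x)\<^sup>2"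
    using assms[of x 0] by (intro power_mono) auto
  finally show ?thesis by (simp add: power_mult_distrib)
qed

lemma smooth_quadratic_growth:
  fixes F :: "'a::real_inner \<Rightarrow> real"
  assumes deriv: "\<And>x. GDERIV F x :> g x"
    and lip: "\<And>x y. norm (g x - g y) \<le> L * norm (x - y)" and L: "0 \<le> L"
  shows "\<bar>F x\<bar> \<le> (\<bar>F 0\<bar> + norm (g 0)) + (norm (g 0) + 2 * L) * (norm x)\<^sup>2"
proof -
  have upper: "F x \<le> F 0 + norm (g 0) * norm x + 1 / 2 * (L * (norm x)\<^sup>2)"
    using lipschitz_gradient_descent[OF deriv lip, where x=0 and y=x] Cauchy_Schwarz_ineq2[of "g 0" x]
    by simp
  have "norm (g x) \<le> norm (g 0) + L * norm x"
    using lip[of x 0] norm_triangle_ineq2[of "g x" "g 0"] by simp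
  then have "\<bar>inner (g x) x\<bar> \<le> (norm (g 0) + L * norm x) * norm x"
    using Cauchy_Schwarz_ineq2[of "g x" x] by (meson mult_right_mono norm_ge_zero order_trans)
  then have "- inner (g x) x \<le> norm (g 0) * norm x + L * (norm x)\<^sup>2"
    by (simp add: algebra_simps power2_eq_square)
  moreover have "F 0 \<le> F x - inner (g x) x + 1 / 2 * (L * (norm x)\<^sup>2)"
    using lipschitz_gradient_descent[OF deriv lip, where x=x and y=0] by (simp add: inner_minus_right)
  ultimately have lower: "F 0 - norm (g 0) * norm x - 3 / 2 * (L * (norm x)\<^sup>2) \<le> F x"
    by linarith
  have "norm x \<le> 1 + (norm x)\<^sup>2"
    using sum_squares_bound[of "norm x" 1] norm_ge_zero[of x] unfolding power_one mult_1_right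
    by linarith
  then have "norm (g 0) * norm x \<le> norm (g 0) + norm (g 0) * (norm x)\<^sup>2"
    using mult_left_mono[of "norm x" "1 + (norm x)\<^sup>2" "norm (g 0)"] by (simp add: distrib_left)
  moreover have "(\<bar>F 0\<bar> + norm (g 0)) + (norm (g 0) + 2 * L) * (norm x)\<^sup>2
      = \<bar>F 0\<bar> + norm (g 0) + norm (g 0) * (norm x)\<^sup>2 + 2 * (L * (norm x)\<^sup>2)"
    by (simp add: algebra_simps)
  moreover have "0 \<le> L * (norm x)\<^sup>2" using L by simp
  ultimately show ?thesis
    using upper lower abs_ge_self[of "F 0"] abs_ge_minus_self[of "F 0"] unfolding abs_le_iff by linarith
qed

lemma norm_sum_squared_le_card:
  fixes v :: "'i \<Rightarrow> 'a::real_normed_vector"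
  shows "(norm (\<Sum>k\<in>K. v k))\<^sup>2 \<le> real (card K) * (\<Sum>k\<in>K. (norm (v k))\<^sup>2)"
proof -
  have "(norm (\<Sum>k\<in>K. v k))\<^sup>2 \<le> (\<Sum>k\<in>K. norm (v k))\<^sup>2"
    by (intro power_mono norm_sum) simp
  also have "\<dots> \<le> (\<Sum>k\<in>K. (norm (v k))\<^sup>2) * real (card K)"
    by (rule sum_squared_le_sum_of_squares)
  finally show ?thesis by (simp add: mult.commute)
qed

lemma norm_average_squared_le:
  fixes v :: "'i \<Rightarrow> 'a::real_normed_vector"
  assumes "card K > 0"
  shows "(norm ((1 / real (card K)) *\<^sub>R (\<Sum>k\<in>K. v k)))\<^sup>2 \<le> (1 / real (card K)) * (\<Sum>k\<in>K. (norm (v k))\<^sup>2)"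
proof -
  have "(norm ((1 / real (card K)) *\<^sub>R (\<Sum>k\<in>K. v k)))\<^sup>2 = (1 / real (card K))\<^sup>2 * (norm (\<Sum>k\<in>K. v k))\<^sup>2"
    by (simp add: power_divide)
  also have "\<dots> \<le> (1 / real (card K))\<^sup>2 * (real (card K) * (\<Sum>k\<in>K. (norm (v k))\<^sup>2))"
    by (intro mult_left_mono norm_sum_squared_le_card) simp
  also have "\<dots> = (1 / real (card K)) * (\<Sum>k\<in>K. (norm (v k))\<^sup>2)"
    using assms by (simp add: power2_eq_square)
  finally show ?thesis .
qed

section \<open>Square-integrable random vectors\<close>

definition sq_integrable :: "'m measure \<Rightarrow> ('m \<Rightarrow> 'a::real_normed_vector) \<Rightarrow> bool" where
  "sq_integrable M X \<longleftrightarrow> X \<in> borel_measurable M \<and> integrable M (\<lambda>w. (norm (X w))\<^sup>2)"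

lemma sq_integrableD:
  "sq_integrable M X \<Longrightarrow> X \<in> borel_measurable M"
  "sq_integrable M X \<Longrightarrow> integrable M (\<lambda>w. (norm (X w))\<^sup>2)"
  by (simp_all add: sq_integrable_def)

lemma sq_integrable_const: "finite_measure M \<Longrightarrow> sq_integrable M (\<lambda>_. c)"
  by (simp add: sq_integrable_def finite_measure.integrable_const)

lemma sq_integrable_zero: "sq_integrable M (\<lambda>_. 0)"
  by (simp add: sq_integrable_def)

lemma sq_integrable_add:
  fixes X Y :: "'m \<Rightarrow> 'a::{real_normed_vector, second_countable_topology}"
  assumes X: "sq_integrable M X" and Y: "sq_integrable M Y"
  shows "sq_integrable M (\<lambda>w. X w + Y w)"
  unfolding sq_integrable_def
proof
  show meas: "(\<lambda>w. X w + Y w) \<in> borel_measurable M" using X Y by (auto simp: sq_integrable_def)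
  show "integrable M (\<lambda>w. (norm (X w + Y w))\<^sup>2)"
  proof (rule Bochner_Integration.integrable_bound)
    show "integrable M (\<lambda>w. 2 * (norm (X w))\<^sup>2 + 2 * (norm (Y w))\<^sup>2)"
      using X Y by (auto simp: sq_integrable_def)
    show "AE w in M. norm ((norm (X w + Y w))\<^sup>2) \<le> norm (2 * (norm (X w))\<^sup>2 + 2 * (norm (Y w))\<^sup>2)"
      using norm_add_squared_le by auto
  qed (use meas in measurable)
qed

lemma sq_integrable_scaleR:
  fixes X :: "'m \<Rightarrow> 'a::{real_normed_vector, second_countable_topology}"
  shows "sq_integrable M X \<Longrightarrow> sq_integrable M (\<lambda>w. c *\<^sub>R X w)"
  unfolding sq_integrable_def by (auto simp: power_mult_distrib)

lemma sq_integrable_diff: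
  fixes X Y :: "'m \<Rightarrow> 'a::{real_normed_vector, second_countable_topology}"
  assumes "sq_integrable M X" "sq_integrable M Y"
  shows "sq_integrable M (\<lambda>w. X w - Y w)"
  using sq_integrable_add[OF assms(1) sq_integrable_scaleR[OF assms(2), of "-1"]] by simp

lemma sq_integrable_uminus:
  fixes X :: "'m \<Rightarrow> 'a::{real_normed_vector, second_countable_topology}"
  shows "sq_integrable M X \<Longrightarrow> sq_integrable M (\<lambda>w. - X w)"
  using sq_integrable_scaleR[where c="-1"] by simp

lemma sq_integrable_sum:
  fixes X :: "'k \<Rightarrow> 'm \<Rightarrow> 'a::{real_normed_vector, second_countable_topology}"
  shows "(\<And>k. k \<in> K \<Longrightarrow> sq_integrable M (X k)) \<Longrightarrow> sq_integrable M (\<lambda>w. \<Sum>k\<in>K. X k w)"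
  by (induction K rule: infinite_finite_induct) (auto intro: sq_integrable_add sq_integrable_zero)

lemma integrable_inner_sq_integrable:
  fixes V W :: "'m \<Rightarrow> 'a::{real_inner, second_countable_topology}"
  assumes V: "sq_integrable M V" and W: "sq_integrable M W"
  shows "integrable M (\<lambda>w. inner (V w) (W w))"
proof (rule Bochner_Integration.integrable_bound)
  show "integrable M (\<lambda>w. (norm (V w))\<^sup>2 + (norm (W w))\<^sup>2)"
    using V W by (auto simp: sq_integrable_def)
  show "(\<lambda>w. inner (V w) (W w)) \<in> borel_measurable M" using V W by (auto simp: sq_integrable_def)
  have "\<bar>inner v w\<bar> \<le> (norm v)\<^sup>2 + (norm w)\<^sup>2" for v w :: 'a
    using Cauchy_Schwarz_ineq2[of v w] sum_squares_bound[of "norm v" "norm w"]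
      mult_nonneg_nonneg[OF norm_ge_zero norm_ge_zero, of v w]
    by linarith
  then show "AE w in M. norm (inner (V w) (W w)) \<le> norm ((norm (V w))\<^sup>2 + (norm (W w))\<^sup>2)"
    by simp
qed

lemma lipschitz_borel_measurable:
  fixes g :: "'a::euclidean_space \<Rightarrow> 'b::real_normed_vector"
  assumes lip: "\<And>x y. norm (g x - g y) \<le> L * norm (x - y)"
  shows "g \<in> borel_measurable borel"
proof -
  have "L-lipschitz_on UNIV g"
    using lip lipschitz_constant_nonneg[OF lip] by (auto simp: lipschitz_on_def dist_norm)
  then show ?thesis
    by (intro borel_measurable_continuous_onI lipschitz_on_continuous_on)
qed

lemma sq_integrable_lipschitz_comp:
  fixes X :: "'m \<Rightarrow> 'a::euclidean_space" and g :: "'a \<Rightarrow> 'b::euclidean_space"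
  assumes M: "finite_measure M" and X: "sq_integrable M X"
    and lip: "\<And>x y. norm (g x - g y) \<le> L * norm (x - y)"
  shows "sq_integrable M (\<lambda>w. g (X w))"
  unfolding sq_integrable_def
proof
  show meas: "(\<lambda>w. g (X w)) \<in> borel_measurable M"
    using X lipschitz_borel_measurable[OF lip] by (auto simp: sq_integrable_def)
  show "integrable M (\<lambda>w. (norm (g (X w)))\<^sup>2)"
  proof (rule Bochner_Integration.integrable_bound)
    show "integrable M (\<lambda>w. 2 * (norm (g 0))\<^sup>2 + 2 * L\<^sup>2 * (norm (X w))\<^sup>2)"
      using X M by (auto simp: sq_integrable_def finite_measure.integrable_const)
    show "AE w in M. norm ((norm (g (X w)))\<^sup>2) \<le> norm (2 * (norm (g 0))\<^sup>2 + 2 * L\<^sup>2 * (norm (X w))\<^sup>2)"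
      using lipschitz_squared_growth[OF lip] by (auto intro!: order_trans[OF _ abs_ge_self])
  qed (use meas in measurable)
qed

lemma integrable_quadratic_growth_comp:
  fixes X :: "'m \<Rightarrow> 'a::euclidean_space" and F :: "'a \<Rightarrow> real"
  assumes M: "finite_measure M" and X: "sq_integrable M X"
    and F: "continuous_on UNIV F" and growth: "\<And>x. \<bar>F x\<bar> \<le> a + b * (norm x)\<^sup>2"
  shows "integrable M (\<lambda>w. F (X w))"
proof (rule Bochner_Integration.integrable_bound)
  show "integrable M (\<lambda>w. a + b * (norm (X w))\<^sup>2)"
    using X M by (auto simp: sq_integrable_def finite_measure.integrable_const)
  show "(\<lambda>w. F (X w)) \<in> borel_measurable M"
    using X borel_measurable_continuous_onI[OF F] by (auto simp: sq_integrable_def)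
  show "AE w in M. norm (F (X w)) \<le> norm (a + b * (norm (X w))\<^sup>2)"
    using growth by (auto intro!: order_trans[OF _ abs_ge_self])
qed

lemma integral_norm_sum_orthogonal:
  fixes \<nu> :: "'k \<Rightarrow> 'm \<Rightarrow> 'a::{real_inner, second_countable_topology}"
  assumes K: "finite K" and sq: "\<And>k. k \<in> K \<Longrightarrow> sq_integrable M (\<nu> k)"
    and orth: "\<And>k k'. k \<in> K \<Longrightarrow> k' \<in> K \<Longrightarrow> k \<noteq> k' \<Longrightarrow> (\<integral>w. inner (\<nu> k w) (\<nu> k' w) \<partial>M) = 0"
  shows "(\<integral>w. (norm (\<Sum>k\<in>K. c k *\<^sub>R \<nu> k w))\<^sup>2 \<partial>M) = (\<Sum>k\<in>K. (c k)\<^sup>2 * (\<integral>w. (norm (\<nu> k w))\<^sup>2 \<partial>M))"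
proof -
  have expand: "(norm (\<Sum>k\<in>K. c k *\<^sub>R \<nu> k w))\<^sup>2 = (\<Sum>k\<in>K. \<Sum>k'\<in>K. c k * c k' * inner (\<nu> k' w) (\<nu> k w))" for w
    by (simp add: power2_norm_eq_inner inner_sum_left inner_sum_right sum_distrib_left mult.assoc)
  have "integrable M (\<lambda>w. c k * c k' * inner (\<nu> k' w) (\<nu> k w))" if "k \<in> K" "k' \<in> K" for k k'
    using that by (intro integrable_mult_right integrable_inner_sq_integrable sq)
  then have "(\<integral>w. (norm (\<Sum>k\<in>K. c k *\<^sub>R \<nu> k w))\<^sup>2 \<partial>M)
      = (\<Sum>k\<in>K. \<Sum>k'\<in>K. c k * c k' * (\<integral>w. inner (\<nu> k' w) (\<nu> k w) \<partial>M))"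
    unfolding expand by (simp add: Bochner_Integration.integrable_sum)
  also have "\<dots> = (\<Sum>k\<in>K. (c k)\<^sup>2 * (\<integral>w. inner (\<nu> k w) (\<nu> k w) \<partial>M))"
  proof (intro sum.cong refl)
    fix k assume k: "k \<in> K"
    have "(\<Sum>k'\<in>K. c k * c k' * (\<integral>w. inner (\<nu> k' w) (\<nu> k w) \<partial>M))
        = (\<Sum>k'\<in>K. if k' = k then (c k)\<^sup>2 * (\<integral>w. inner (\<nu> k w) (\<nu> k w) \<partial>M) else 0)"
      using orth k by (intro sum.cong refl) (auto simp: power2_eq_square)
    then show "(\<Sum>k'\<in>K. c k * c k' * (\<integral>w. inner (\<nu> k' w) (\<nu> k w) \<partial>M))
        = (c k)\<^sup>2 * (\<integral>w. inner (\<nu> k w) (\<nu> k w) \<partial>M)"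
      using K k by simp
  qed
  finally show ?thesis by (simp add: power2_norm_eq_inner)
qed

definition ignores_coord :: "'i \<Rightarrow> (('i \<Rightarrow> 'b) \<Rightarrow> 'c) \<Rightarrow> bool" where
  "ignores_coord a X \<longleftrightarrow> (\<forall>w y. X (w(a := y)) = X w)"

lemma ignores_coord_comp: "ignores_coord a X \<Longrightarrow> ignores_coord a (\<lambda>w. f (X w))"
  by (simp add: ignores_coord_def)

context finite_product_prob_space
begin

lemma nn_integral_PiM_split_coord:
  assumes a: "a \<in> I" and f: "f \<in> borel_measurable (\<Pi>\<^sub>M i\<in>I. M i)"
  shows "(\<integral>\<^sup>+w. f w \<partial>(\<Pi>\<^sub>M i\<in>I. M i)) = (\<integral>\<^sup>+x. (\<integral>\<^sup>+y. f (x(a := y)) \<partial>M a) \<partial>(\<Pi>\<^sub>M i\<in>I - {a}. M i))"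
proof -
  have "(\<integral>\<^sup>+w. f w \<partial>(\<Pi>\<^sub>M i\<in>I. M i)) = (\<integral>\<^sup>+w. f w \<partial>(\<Pi>\<^sub>M i\<in>insert a (I - {a}). M i))"
    using a by (simp add: insert_absorb)
  also have "\<dots> = (\<integral>\<^sup>+x. (\<integral>\<^sup>+y. f (x(a := y)) \<partial>M a) \<partial>(\<Pi>\<^sub>M i\<in>I - {a}. M i))"
    using a f finite_index by (intro product_nn_integral_insert) (auto simp: insert_absorb)
  finally show ?thesis .
qed

lemma integral_PiM_split_coord:
  fixes f :: "_ \<Rightarrow> 'z::{banach, second_countable_topology}"
  assumes a: "a \<in> I" and f: "integrable (\<Pi>\<^sub>M i\<in>I. M i) f"
  shows "(\<integral>w. f w \<partial>(\<Pi>\<^sub>M i\<in>I. M i)) = (\<integral>x. (\<integral>y. f (x(a := y)) \<partial>M a) \<partial>(\<Pi>\<^sub>M i\<in>I - {a}. M i))"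
proof -
  have "(\<integral>w. f w \<partial>(\<Pi>\<^sub>M i\<in>I. M i)) = (\<integral>w. f w \<partial>(\<Pi>\<^sub>M i\<in>insert a (I - {a}). M i))"
    using a by (simp add: insert_absorb)
  also have "\<dots> = (\<integral>x. (\<integral>y. f (x(a := y)) \<partial>M a) \<partial>(\<Pi>\<^sub>M i\<in>I - {a}. M i))"
    using a f finite_index by (intro product_integral_insert) (auto simp: insert_absorb)
  finally show ?thesis .
qed

text \<open>Fubini: the coordinate \<open>a\<close> is integrated first, with \<open>X w\<close> held fixed.\<close>
lemma coord_noise_second_moment:
  fixes X :: "_ \<Rightarrow> 'x::topological_space" and g :: "'x \<Rightarrow> 'b \<Rightarrow> 'v::{real_normed_vector, second_countable_topology}"
  assumes a: "a \<in> I" and X: "X \<in> borel_measurable (\<Pi>\<^sub>M i\<in>I. M i)" "ignores_coord a X"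
    and g: "(\<lambda>p. g (fst p) (snd p)) \<in> borel_measurable (borel \<Otimes>\<^sub>M M a)"
    and m: "m \<in> borel_measurable borel"
    and var: "\<And>x. (\<integral>\<^sup>+y. ennreal ((norm (g x y - m x))\<^sup>2) \<partial>M a) \<le> ennreal (\<sigma>\<^sup>2)"
  shows "sq_integrable (\<Pi>\<^sub>M i\<in>I. M i) (\<lambda>w. g (X w) (w a) - m (X w))"
    and "(\<integral>w. (norm (g (X w) (w a) - m (X w)))\<^sup>2 \<partial>(\<Pi>\<^sub>M i\<in>I. M i)) \<le> \<sigma>\<^sup>2"
proof -
  let ?Z = "\<lambda>w. g (X w) (w a) - m (X w)"
  have "(\<lambda>w. (X w, w a)) \<in> measurable (\<Pi>\<^sub>M i\<in>I. M i) (borel \<Otimes>\<^sub>M M a)"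
    using X a by (intro measurable_Pair) auto
  from measurable_compose[OF this g] have meas: "?Z \<in> borel_measurable (\<Pi>\<^sub>M i\<in>I. M i)"
    using X m by simp
  have "(\<integral>\<^sup>+w. ennreal ((norm (?Z w))\<^sup>2) \<partial>(\<Pi>\<^sub>M i\<in>I. M i))
      = (\<integral>\<^sup>+x. (\<integral>\<^sup>+y. ennreal ((norm (g (X x) y - m (X x)))\<^sup>2) \<partial>M a) \<partial>(\<Pi>\<^sub>M i\<in>I - {a}. M i))"
    using nn_integral_PiM_split_coord[OF a] meas X(2) by (simp add: ignores_coord_def)
  also have "\<dots> \<le> (\<integral>\<^sup>+x. ennreal (\<sigma>\<^sup>2) \<partial>(\<Pi>\<^sub>M i\<in>I - {a}. M i))"
    by (intro nn_integral_mono var)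
  also have "\<dots> = ennreal (\<sigma>\<^sup>2)"
    using prob_space_PiM[of "I - {a}" M] prob_space by (simp add: prob_space.emeasure_space_1)
  finally have bound: "(\<integral>\<^sup>+w. ennreal ((norm (?Z w))\<^sup>2) \<partial>(\<Pi>\<^sub>M i\<in>I. M i)) \<le> ennreal (\<sigma>\<^sup>2)" .
  then show "sq_integrable (\<Pi>\<^sub>M i\<in>I. M i) ?Z"
    using meas by (auto simp: sq_integrable_def top.not_eq_extremum intro!: integrableI_bounded
        dest: order.strict_trans1[OF _ ennreal_less_top])
  have "(\<integral>w. (norm (?Z w))\<^sup>2 \<partial>(\<Pi>\<^sub>M i\<in>I. M i))
      = enn2real (\<integral>\<^sup>+w. ennreal ((norm (?Z w))\<^sup>2) \<partial>(\<Pi>\<^sub>M i\<in>I. M i))"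
    using meas by (intro integral_eq_nn_integral) auto
  also have "\<dots> \<le> \<sigma>\<^sup>2"
    using enn2real_mono[OF bound] by simp
  finally show "(\<integral>w. (norm (?Z w))\<^sup>2 \<partial>(\<Pi>\<^sub>M i\<in>I. M i)) \<le> \<sigma>\<^sup>2" .
qed

lemma coord_noise_orthogonal:
  fixes X :: "_ \<Rightarrow> 'x::topological_space" and g :: "'x \<Rightarrow> 'b \<Rightarrow> 'v::euclidean_space"
  assumes a: "a \<in> I" and X: "ignores_coord a X" and V: "sq_integrable (\<Pi>\<^sub>M i\<in>I. M i) V" "ignores_coord a V"
    and noise: "sq_integrable (\<Pi>\<^sub>M i\<in>I. M i) (\<lambda>w. g (X w) (w a) - m (X w))"
    and mean: "\<And>x. integrable (M a) (g x) \<and> (\<integral>y. g x y \<partial>M a) = m x"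
  shows "(\<integral>w. inner (V w) (g (X w) (w a) - m (X w)) \<partial>(\<Pi>\<^sub>M i\<in>I. M i)) = 0"
proof -
  have "(\<integral>w. inner (V w) (g (X w) (w a) - m (X w)) \<partial>(\<Pi>\<^sub>M i\<in>I. M i))
      = (\<integral>x. (\<integral>y. inner (V x) (g (X x) y - m (X x)) \<partial>M a) \<partial>(\<Pi>\<^sub>M i\<in>I - {a}. M i))"
    using integral_PiM_split_coord[OF a integrable_inner_sq_integrable[OF V(1) noise]] X V(2)
    by (simp add: ignores_coord_def)
  also have "\<dots> = (\<integral>x. 0 \<partial>(\<Pi>\<^sub>M i\<in>I - {a}. M i))"
  proof (intro Bochner_Integration.integral_cong refl)
    fix x
    have "integrable (M a) (\<lambda>y. g (X x) y - m (X x))"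
      using mean by (intro Bochner_Integration.integrable_diff) auto
    then have "(\<integral>y. inner (V x) (g (X x) y - m (X x)) \<partial>M a) = inner (V x) (\<integral>y. g (X x) y - m (X x) \<partial>M a)"
      by simp
    also have "(\<integral>y. g (X x) y - m (X x) \<partial>M a) = 0"
      using mean[of "X x"] by (subst Bochner_Integration.integral_diff) (auto simp: M.prob_space)
    finally show "(\<integral>y. inner (V x) (g (X x) y - m (X x)) \<partial>M a) = 0" by simp
  qed
  finally show ?thesis by simp
qed

end

lemma (in prob_space) integral_indep_vars_PiM:
  fixes f :: "_ \<Rightarrow> 'b::{banach, second_countable_topology}"
  assumes J: "J \<noteq> {}" and indep: "indep_vars M' X J"
    and X: "\<And>i. i \<in> J \<Longrightarrow> random_variable (M' i) (X i)" "\<And>i. i \<in> J \<Longrightarrow> distr M (M' i) (X i) = M' i"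
    and f: "f \<in> borel_measurable (\<Pi>\<^sub>M i\<in>J. M' i)"
  shows "(\<integral>\<omega>. f (\<lambda>i\<in>J. X i \<omega>) \<partial>M) = (\<integral>w. f w \<partial>(\<Pi>\<^sub>M i\<in>J. M' i))"
proof -
  have "distr M (\<Pi>\<^sub>M i\<in>J. M' i) (\<lambda>\<omega>. \<lambda>i\<in>J. X i \<omega>) = (\<Pi>\<^sub>M i\<in>J. distr M (M' i) (X i))"
    using indep_vars_iff_distr_eq_PiM'[OF J X(1)] indep by simp
  also have "\<dots> = (\<Pi>\<^sub>M i\<in>J. M' i)"
    using X(2) by (intro PiM_cong) auto
  finally have distr: "distr M (\<Pi>\<^sub>M i\<in>J. M' i) (\<lambda>\<omega>. \<lambda>i\<in>J. X i \<omega>) = (\<Pi>\<^sub>M i\<in>J. M' i)" .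
  have "(\<lambda>\<omega>. \<lambda>i\<in>J. X i \<omega>) \<in> measurable M (\<Pi>\<^sub>M i\<in>J. M' i)"
    by (intro measurable_restrict X(1))
  from integral_distr[OF this, of f] show ?thesis
    using f by (simp add: distr)
qed

locale client_groups =
  fixes C :: "nat \<Rightarrow> 'c set" and N :: nat
  assumes N_pos: "N \<ge> 1"
    and groups_fin: "\<forall>j<N. finite (C j) \<and> C j \<noteq> {}"
    and groups_disj: "\<forall>j<N. \<forall>j'<N. j \<noteq> j' \<longrightarrow> C j \<inter> C j' = {}"
begin

definition clients :: "'c set" where "clients = (\<Union>j<N. C j)"

lemma finite_C: "j < N \<Longrightarrow> finite (C j)"
  and C_nonempty: "j < N \<Longrightarrow> C j \<noteq> {}"
  and card_C_pos: "j < N \<Longrightarrow> card (C j) > 0"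
  using groups_fin by (auto simp: card_gt_0_iff)

lemma finite_clients: "finite clients"
  unfolding clients_def using finite_C by auto

lemma C_subset_clients: "j < N \<Longrightarrow> C j \<subseteq> clients"
  unfolding clients_def by auto

lemma clients_nonempty: "clients \<noteq> {}"
  using N_pos C_nonempty[of 0] C_subset_clients[of 0] by auto

lemma grp_eq: "j < N \<Longrightarrow> i \<in> C j \<Longrightarrow> grp C N i = j"
  unfolding grp_def using groups_disj by (intro the_equality) blast+

lemma grp_clients: "i \<in> clients \<Longrightarrow> grp C N i < N \<and> i \<in> C (grp C N i)"
  unfolding clients_def using grp_eq by auto

lemma sum_clients: "(\<Sum>i\<in>clients. g i) = (\<Sum>j<N. \<Sum>i\<in>C j. g i)"
  unfolding clients_def using groups_fin groups_disj by (intro sum.UNION_disjoint) auto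

lemma avgC_const: "j < N \<Longrightarrow> avgC C j (\<lambda>_. c) = c"
  using card_C_pos[of j] by (simp add: avgC_def sum_constant_scaleR)

lemma avgN_const: "avgN N (\<lambda>_. c) = c"
  using N_pos by (simp add: avgN_def sum_constant_scaleR)

lemma avgC_cong: "(\<And>i. i \<in> C j \<Longrightarrow> f i = g i) \<Longrightarrow> avgC C j f = avgC C j g"
  by (simp add: avgC_def)

lemma avgN_cong: "(\<And>j. j < N \<Longrightarrow> f j = g j) \<Longrightarrow> avgN N f = avgN N g"
  by (simp add: avgN_def)

lemma avgC_uminus: "avgC C j (\<lambda>i. - f i) = - avgC C j f"
  by (simp add: avgC_def sum_negf)

lemma avgN_uminus: "avgN N (\<lambda>j. - f j) = - avgN N f"
  by (simp add: avgN_def sum_negf)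

lemma avgC_add: "avgC C j (\<lambda>i. f i + g i) = avgC C j f + avgC C j g"
  by (simp add: avgC_def sum.distrib scaleR_right_distrib)

lemma avgN_add: "avgN N (\<lambda>j. f j + g j) = avgN N f + avgN N g"
  by (simp add: avgN_def sum.distrib scaleR_right_distrib)

lemma avgC_diff: "avgC C j (\<lambda>i. f i - g i) = avgC C j f - avgC C j g"
  by (simp add: avgC_def sum_subtractf scaleR_right_diff_distrib)

lemma avgN_diff: "avgN N (\<lambda>j. f j - g j) = avgN N f - avgN N g"
  by (simp add: avgN_def sum_subtractf scaleR_right_diff_distrib)

lemma avgC_scaleR: "avgC C j (\<lambda>i. c *\<^sub>R f i) = c *\<^sub>R avgC C j f"
  by (simp add: avgC_def scaleR_sum_right[symmetric])

lemma avgN_scaleR: "avgN N (\<lambda>j. c *\<^sub>R f j) = c *\<^sub>R avgN N f"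
  by (simp add: avgN_def scaleR_sum_right[symmetric])

lemma avgC_mult: "avgC C j (\<lambda>i. c * f i) = c * avgC C j (f :: 'c \<Rightarrow> real)"
  using avgC_scaleR[where c=c and f=f] by simp

lemma avgN_mult: "avgN N (\<lambda>j. c * f j) = c * avgN N (f :: nat \<Rightarrow> real)"
  using avgN_scaleR[where c=c and f=f] by simp

lemma avgC_sum: "finite K \<Longrightarrow> avgC C j (\<lambda>i. \<Sum>k\<in>K. f k i) = (\<Sum>k\<in>K. avgC C j (f k))"
  by (simp add: avgC_def scaleR_sum_right sum.swap[of _ K])

lemma avgN_sum: "finite K \<Longrightarrow> avgN N (\<lambda>j. \<Sum>k\<in>K. f k j) = (\<Sum>k\<in>K. avgN N (f k))"
  by (simp add: avgN_def scaleR_sum_right sum.swap[of _ K])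

lemma avgC_mono: "(\<And>i. i \<in> C j \<Longrightarrow> f i \<le> g i) \<Longrightarrow> avgC C j f \<le> avgC C j (g :: 'c \<Rightarrow> real)"
  unfolding avgC_def by (simp, intro divide_right_mono sum_mono) auto

lemma avgN_mono: "(\<And>j. j < N \<Longrightarrow> f j \<le> g j) \<Longrightarrow> avgN N f \<le> avgN N (g :: nat \<Rightarrow> real)"
  unfolding avgN_def by (simp, intro divide_right_mono sum_mono) auto

lemma inner_avgC_left: "inner (avgC C j f) v = avgC C j (\<lambda>i. inner (f i) v)"
  unfolding avgC_def by (simp add: inner_sum_left)

lemma inner_avgN_left: "inner (avgN N f) v = avgN N (\<lambda>j. inner (f j) v)"
  unfolding avgN_def by (simp add: inner_sum_left)

lemma norm_avgC_squared_le: "j < N \<Longrightarrow> (norm (avgC C j f))\<^sup>2 \<le> avgC C j (\<lambda>i. (norm (f i))\<^sup>2)"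
  unfolding avgC_def using norm_average_squared_le[of "C j" f] card_C_pos by simp

lemma norm_avgN_squared_le: "(norm (avgN N f))\<^sup>2 \<le> avgN N (\<lambda>j. (norm (f j))\<^sup>2)"
  unfolding avgN_def using norm_average_squared_le[of "{..<N}" f] N_pos by simp

definition client_weight :: "'c \<Rightarrow> real" where
  "client_weight i = 1 / (real N * real (card (C (grp C N i))))"

lemma avgN_avgC_eq_sum_clients: "avgN N (\<lambda>j. avgC C j f) = (\<Sum>i\<in>clients. client_weight i *\<^sub>R f i)"
proof -
  have "avgN N (\<lambda>j. avgC C j f) = (\<Sum>j<N. \<Sum>i\<in>C j. client_weight i *\<^sub>R f i)"
    unfolding avgN_def avgC_def scaleR_sum_right
    by (intro sum.cong refl) (simp add: client_weight_def grp_eq scaleR_sum_right)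
  then show ?thesis by (simp add: sum_clients)
qed

lemma sum_client_weight_squared:
  "(\<Sum>i\<in>clients. (client_weight i)\<^sup>2) = 1 / (real N)\<^sup>2 * (\<Sum>j<N. 1 / real (card (C j)))"
proof -
  have "(\<Sum>i\<in>clients. (client_weight i)\<^sup>2) = (\<Sum>j<N. \<Sum>i\<in>C j. (1 / (real N * real (card (C j))))\<^sup>2)"
    unfolding sum_clients by (intro sum.cong refl) (simp add: client_weight_def grp_eq)
  also have "\<dots> = (\<Sum>j<N. 1 / (real N)\<^sup>2 * (1 / real (card (C j))))"
    using card_C_pos by (intro sum.cong refl) (simp add: power2_eq_square)
  finally show ?thesis by (simp add: sum_distrib_left)
qed

lemma sq_integrable_avgC:
  fixes X :: "'c \<Rightarrow> 'm \<Rightarrow> 'a::{real_normed_vector, second_countable_topology}"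
  shows "(\<And>i. i \<in> C j \<Longrightarrow> sq_integrable M (X i)) \<Longrightarrow> sq_integrable M (\<lambda>w. avgC C j (\<lambda>i. X i w))"
  unfolding avgC_def by (intro sq_integrable_scaleR sq_integrable_sum)

lemma sq_integrable_avgN:
  fixes X :: "nat \<Rightarrow> 'm \<Rightarrow> 'a::{real_normed_vector, second_countable_topology}"
  shows "(\<And>j. j < N \<Longrightarrow> sq_integrable M (X j)) \<Longrightarrow> sq_integrable M (\<lambda>w. avgN N (\<lambda>j. X j w))"
  unfolding avgN_def by (intro sq_integrable_scaleR sq_integrable_sum) auto

lemma integrable_avgC:
  fixes X :: "'c \<Rightarrow> 'm \<Rightarrow> real"
  shows "(\<And>i. i \<in> C j \<Longrightarrow> integrable M (X i)) \<Longrightarrow> integrable M (\<lambda>w. avgC C j (\<lambda>i. X i w))"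
  unfolding avgC_def by (intro integrable_scaleR_right Bochner_Integration.integrable_sum)

lemma integrable_avgN:
  fixes X :: "nat \<Rightarrow> 'm \<Rightarrow> real"
  shows "(\<And>j. j < N \<Longrightarrow> integrable M (X j)) \<Longrightarrow> integrable M (\<lambda>w. avgN N (\<lambda>j. X j w))"
  unfolding avgN_def by (intro integrable_scaleR_right Bochner_Integration.integrable_sum) auto

lemma integral_avgC:
  fixes X :: "'c \<Rightarrow> 'm \<Rightarrow> real"
  shows "(\<And>i. i \<in> C j \<Longrightarrow> integrable M (X i)) \<Longrightarrow> (\<integral>w. avgC C j (\<lambda>i. X i w) \<partial>M) = avgC C j (\<lambda>i. \<integral>w. X i w \<partial>M)"
  unfolding avgC_def by (simp add: Bochner_Integration.integral_sum)

lemma integral_avgN: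
  fixes X :: "nat \<Rightarrow> 'm \<Rightarrow> real"
  shows "(\<And>j. j < N \<Longrightarrow> integrable M (X j)) \<Longrightarrow> (\<integral>w. avgN N (\<lambda>j. X j w) \<partial>M) = avgN N (\<lambda>j. \<integral>w. X j w \<partial>M)"
  unfolding avgN_def by (simp add: Bochner_Integration.integral_sum)

end

section \<open>The MTGC recursion\<close>

lemma mtgc_local_closed_form:
  "mtgc_local G \<gamma> i sm x z y h =
     x - \<gamma> *\<^sub>R (\<Sum>h'<h. G i (mtgc_local G \<gamma> i sm x z y h') (sm h')) - (\<gamma> * real h) *\<^sub>R (z + y)"
  by (induction h) (simp_all add: algebra_simps scaleR_right_distrib)

lemma mtgc_local_cong:
  "(\<And>h'. h' < h \<Longrightarrow> sm h' = sm' h') \<Longrightarrow> mtgc_local G \<gamma> i sm x z y h = mtgc_local G \<gamma> i sm' x z y h"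
  by (induction h) auto

locale mtgc = client_groups C N for C :: "nat \<Rightarrow> 'c set" and N :: nat +
  fixes G :: "'c \<Rightarrow> 'a::real_vector \<Rightarrow> 's \<Rightarrow> 'a" and \<gamma> :: real and H E :: nat and x0 :: 'a
  assumes H_pos: "H \<ge> 1" and E_pos: "E \<ge> 1"
begin

abbreviation "XB s t \<equiv> xbar G C N \<gamma> H E x0 s t"
abbreviation "YB s t \<equiv> ybar G C N \<gamma> H E x0 s t"
abbreviation "XJ s t e j \<equiv> xbarj G C N \<gamma> H E x0 s t e j"
abbreviation "ZZ s t e i \<equiv> zz G C N \<gamma> H E x0 s t e i"
abbreviation "XL s t e i h \<equiv> xloc G C N \<gamma> H E x0 s t e i h"
abbreviation "XH s t e \<equiv> xhat G C N \<gamma> H E x0 s t e"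

lemma XB_0: "XB s 0 = x0"
  by (simp add: xbar_def)

lemma YB_0: "YB s 0 j = - avgC C j (\<lambda>i. G i x0 (s 0 0 i 0)) + avgN N (\<lambda>j'. avgC C j' (\<lambda>i. G i x0 (s 0 0 i 0)))"
  by (simp add: ybar_def)

lemma XB_Suc: "XB s (Suc t) = avgN N (XJ s t E)"
  by (simp add: xbar_def xbarj_def ybar_def Let_def)

lemma YB_Suc: "YB s (Suc t) j = YB s t j + (1 / (real H * real E * \<gamma>)) *\<^sub>R (XJ s t E j - XB s (Suc t))"
  by (simp add: xbar_def xbarj_def ybar_def Let_def)

lemma XJ_0: "XJ s t 0 j = XB s t"
  by (simp add: xbarj_def)

lemma ZZ_0: "ZZ s t 0 i = - G i (XB s t) (s t 0 i 0) + avgC C (grp C N i) (\<lambda>i'. G i' (XB s t) (s t 0 i' 0))"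
  by (simp add: zz_def)

lemma XJ_Suc: "XJ s t (Suc e) j = avgC C j (\<lambda>i. XL s t e i H)"
  by (simp add: xbarj_def xloc_def zz_def Let_def)

lemma ZZ_Suc: "ZZ s t (Suc e) i = ZZ s t e i + (1 / (real H * \<gamma>)) *\<^sub>R (XL s t e i H - XJ s t (Suc e) (grp C N i))"
  by (simp add: xbarj_def xloc_def zz_def Let_def)

lemma XL_0: "XL s t e i 0 = XJ s t e (grp C N i)"
  by (simp add: xloc_def)

lemma XL_Suc:
  "XL s t e i (Suc h) = XL s t e i h - \<gamma> *\<^sub>R (G i (XL s t e i h) (s t e i h) + ZZ s t e i + YB s t (grp C N i))"
  by (simp add: xloc_def)

lemma XH_eq: "XH s t e = avgN N (XJ s t e)"
  by (simp add: xhat_def)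

lemma XH_0: "XH s t 0 = XB s t"
  by (simp add: XH_eq XJ_0 avgN_const)

lemma XH_E: "XH s t E = XB s (Suc t)"
  by (simp add: XH_eq XB_Suc)

lemma avgC_ZZ: "j < N \<Longrightarrow> avgC C j (ZZ s t e) = 0"
proof (induction e)
  case 0
  have "avgC C j (ZZ s t 0)
      = avgC C j (\<lambda>i. - G i (XB s t) (s t 0 i 0) + avgC C j (\<lambda>i'. G i' (XB s t) (s t 0 i' 0)))"
    using 0 by (intro avgC_cong) (simp add: ZZ_0 grp_eq)
  also have "\<dots> = 0"
    using 0 by (simp only: avgC_add avgC_const avgC_uminus) simp
  finally show ?case .
next
  case (Suc e)
  have "avgC C j (ZZ s t (Suc e))
      = avgC C j (\<lambda>i. ZZ s t e i + (1 / (real H * \<gamma>)) *\<^sub>R (XL s t e i H - XJ s t (Suc e) j))"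
    using Suc by (intro avgC_cong) (simp add: ZZ_Suc grp_eq)
  also have "\<dots> = 0"
    using Suc by (simp add: avgC_add avgC_scaleR avgC_diff avgC_const XJ_Suc)
  finally show ?case .
qed

lemma avgN_YB: "avgN N (YB s t) = 0"
proof (induction t)
  case 0
  show ?case
    by (simp only: YB_0 avgN_add avgN_uminus avgN_const) simp
next
  case (Suc t)
  show ?case
    by (simp add: YB_Suc avgN_add avgN_scaleR avgN_diff avgN_const Suc XB_Suc)
qed

lemma XL_H:
  "XL s t e i H = XJ s t e (grp C N i) - \<gamma> *\<^sub>R (\<Sum>h<H. G i (XL s t e i h) (s t e i h))
     - (\<gamma> * real H) *\<^sub>R (ZZ s t e i + YB s t (grp C N i))"
  unfolding xloc_def by (subst mtgc_local_closed_form) simp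

lemma XH_Suc:
  "XH s t (Suc e) = XH s t e - \<gamma> *\<^sub>R (\<Sum>h<H. avgN N (\<lambda>j. avgC C j (\<lambda>i. G i (XL s t e i h) (s t e i h))))"
proof -
  have XJ: "XJ s t (Suc e) j = XJ s t e j - \<gamma> *\<^sub>R (\<Sum>h<H. avgC C j (\<lambda>i. G i (XL s t e i h) (s t e i h)))
             - (\<gamma> * real H) *\<^sub>R YB s t j" if j: "j < N" for j
  proof -
    have "XJ s t (Suc e) j = avgC C j (\<lambda>i. XJ s t e j - \<gamma> *\<^sub>R (\<Sum>h<H. G i (XL s t e i h) (s t e i h))
      - (\<gamma> * real H) *\<^sub>R (ZZ s t e i + YB s t j))"
      unfolding XJ_Suc using j by (intro avgC_cong) (auto simp: XL_H grp_eq)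
    also have "\<dots> = XJ s t e j - \<gamma> *\<^sub>R (\<Sum>h<H. avgC C j (\<lambda>i. G i (XL s t e i h) (s t e i h)))
             - (\<gamma> * real H) *\<^sub>R YB s t j"
      using j by (simp add: avgC_diff avgC_scaleR avgC_add avgC_const avgC_sum avgC_ZZ scaleR_right_distrib)
    finally show ?thesis .
  qed
  have "XH s t (Suc e) = avgN N (\<lambda>j. XJ s t e j - \<gamma> *\<^sub>R (\<Sum>h<H. avgC C j (\<lambda>i. G i (XL s t e i h) (s t e i h)))
             - (\<gamma> * real H) *\<^sub>R YB s t j)"
    unfolding XH_eq by (intro avgN_cong) (simp add: XJ)
  also have "\<dots> = XH s t e - \<gamma> *\<^sub>R (\<Sum>h<H. avgN N (\<lambda>j. avgC C j (\<lambda>i. G i (XL s t e i h) (s t e i h))))"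
    by (simp add: avgN_diff avgN_scaleR avgN_sum avgN_YB XH_eq)
  finally show ?thesis .
qed

end

section \<open>Causality of the iterates\<close>

definition sample_before :: "nat \<Rightarrow> nat \<Rightarrow> nat \<Rightarrow> nat \<Rightarrow> nat \<Rightarrow> nat \<Rightarrow> bool" where
  "sample_before t' e' h' t e h \<longleftrightarrow> t' < t \<or> (t' = t \<and> (e' < e \<or> (e' = e \<and> h' < h)))"

context mtgc
begin

definition agree_before :: "(nat \<Rightarrow> nat \<Rightarrow> 'c \<Rightarrow> nat \<Rightarrow> 's) \<Rightarrow> (nat \<Rightarrow> nat \<Rightarrow> 'c \<Rightarrow> nat \<Rightarrow> 's)
    \<Rightarrow> nat \<Rightarrow> nat \<Rightarrow> nat \<Rightarrow> bool" where
  "agree_before s s' t e h \<longleftrightarrow> (\<forall>t' e' i h'. i \<in> clients \<and> e' < E \<and> h' < H \<and> sample_before t' e' h' t e h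
      \<longrightarrow> s t' e' i h' = s' t' e' i h')"

lemma mtgc_inner_cong:
  assumes "\<forall>i\<in>clients. st 0 i 0 = st' 0 i 0" "\<forall>e'<e. \<forall>i\<in>clients. \<forall>h<H. st e' i h = st' e' i h"
    and "\<forall>j<N. y j = y' j"
  shows "(\<forall>j<N. fst (mtgc_inner G C N \<gamma> H st xb0 y e) j = fst (mtgc_inner G C N \<gamma> H st' xb0 y' e) j)
       \<and> (\<forall>i\<in>clients. snd (mtgc_inner G C N \<gamma> H st xb0 y e) i = snd (mtgc_inner G C N \<gamma> H st' xb0 y' e) i)"
  using assms(2)
proof (induction e)
  case 0
  show ?case using assms(1) grp_clients C_subset_clients by (auto intro!: avgC_cong) (metis subsetD)
next
  case (Suc e)
  then have IH: "\<forall>j<N. fst (mtgc_inner G C N \<gamma> H st xb0 y e) j = fst (mtgc_inner G C N \<gamma> H st' xb0 y' e) j"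
     "\<forall>i\<in>clients. snd (mtgc_inner G C N \<gamma> H st xb0 y e) i = snd (mtgc_inner G C N \<gamma> H st' xb0 y' e) i"
    by auto
  have xH: "mtgc_local G \<gamma> i (st e i) (fst (mtgc_inner G C N \<gamma> H st xb0 y e) (grp C N i))
          (snd (mtgc_inner G C N \<gamma> H st xb0 y e) i) (y (grp C N i)) H =
        mtgc_local G \<gamma> i (st' e i) (fst (mtgc_inner G C N \<gamma> H st' xb0 y' e) (grp C N i))
          (snd (mtgc_inner G C N \<gamma> H st' xb0 y' e) i) (y' (grp C N i)) H" if "i \<in> clients" for i
    using IH assms(3) grp_clients[OF that] Suc.prems that
    by (simp, intro mtgc_local_cong) auto
  have "avgC C j (\<lambda>i. mtgc_local G \<gamma> i (st e i) (fst (mtgc_inner G C N \<gamma> H st xb0 y e) (grp C N i))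
          (snd (mtgc_inner G C N \<gamma> H st xb0 y e) i) (y (grp C N i)) H) =
        avgC C j (\<lambda>i. mtgc_local G \<gamma> i (st' e i) (fst (mtgc_inner G C N \<gamma> H st' xb0 y' e) (grp C N i))
          (snd (mtgc_inner G C N \<gamma> H st' xb0 y' e) i) (y' (grp C N i)) H)" if "j < N" for j
    using xH C_subset_clients[OF that] by (intro avgC_cong) auto
  then show ?case
    using xH IH grp_clients by (auto simp: Let_def)
qed

lemma mtgc_outer_cong:
  assumes "\<forall>t'<t. \<forall>e<E. \<forall>i\<in>clients. \<forall>h<H. s t' e i h = s' t' e i h" "\<forall>i\<in>clients. s 0 0 i 0 = s' 0 0 i 0"
  shows "XB s t = XB s' t \<and> (\<forall>j<N. YB s t j = YB s' t j)"
  using assms(1)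
proof (induction t)
  case 0
  have "avgC C j (\<lambda>i. G i x0 (s 0 0 i 0)) = avgC C j (\<lambda>i. G i x0 (s' 0 0 i 0))" if "j < N" for j
    using assms(2) C_subset_clients[OF that] by (intro avgC_cong) auto
  then show ?case by (auto simp: xbar_def ybar_def intro!: avgN_cong)
next
  case (Suc t)
  then have IH: "XB s t = XB s' t" "\<forall>j<N. YB s t j = YB s' t j" by auto
  have inner: "\<forall>j<N. fst (mtgc_inner G C N \<gamma> H (s t) (XB s t) (YB s t) E) j
                   = fst (mtgc_inner G C N \<gamma> H (s' t) (XB s' t) (YB s' t) E) j"
    unfolding IH(1)
    by (rule conjunct1[OF mtgc_inner_cong]) (use Suc.prems IH(2) E_pos H_pos in auto)
  then have "avgN N (fst (mtgc_inner G C N \<gamma> H (s t) (XB s t) (YB s t) E))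
         = avgN N (fst (mtgc_inner G C N \<gamma> H (s' t) (XB s' t) (YB s' t) E))"
    by (intro avgN_cong) auto
  then show ?case
    using inner IH(2) unfolding xbar_def ybar_def by (simp add: Let_def)
qed

lemma XB_agree: assumes "agree_before s s' t e h" shows "XB s t = XB s' t"
proof (cases t)
  case 0 then show ?thesis by (simp add: XB_0)
next
  case (Suc t1)
  show ?thesis
    by (rule conjunct1[OF mtgc_outer_cong])
       (use assms Suc E_pos H_pos in \<open>auto simp: agree_before_def sample_before_def\<close>)
qed

lemma YB_agree:
  assumes "agree_before s s' t e h" "t \<ge> 1 \<or> e \<ge> 1 \<or> h \<ge> 1" "j < N"
  shows "YB s t j = YB s' t j"
proof -
  have "\<forall>t'<t. \<forall>e<E. \<forall>i\<in>clients. \<forall>h<H. s t' e i h = s' t' e i h"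
    using assms(1) by (auto simp: agree_before_def sample_before_def)
  moreover have "\<forall>i\<in>clients. s 0 0 i 0 = s' 0 0 i 0"
    using assms(1,2) E_pos H_pos unfolding agree_before_def sample_before_def
    by (metis One_nat_def Suc_le_eq le_neq_implies_less le_zero_eq less_one not_gr_zero)
  ultimately show ?thesis using mtgc_outer_cong assms(3) by blast
qed

lemma XJ_agree:
  assumes "agree_before s s' t e 0" "e \<le> E" "j < N"
  shows "XJ s t e j = XJ s' t e j"
proof (cases e)
  case 0 then show ?thesis using XB_agree[OF assms(1)] by (simp add: XJ_0)
next
  case (Suc e1)
  have "\<forall>j<N. YB s t j = YB s' t j" using YB_agree[OF assms(1)] Suc by auto
  then have "fst (mtgc_inner G C N \<gamma> H (s t) (XB s t) (YB s t) e) j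
      = fst (mtgc_inner G C N \<gamma> H (s' t) (XB s t) (YB s' t) e) j"
    by (intro conjunct1[OF mtgc_inner_cong, rule_format])
       (use assms Suc E_pos H_pos in \<open>auto simp: agree_before_def sample_before_def\<close>)
  then show ?thesis unfolding xbarj_def XB_agree[OF assms(1)] .
qed

lemma ZZ_agree:
  assumes "agree_before s s' t e h" "e < E" "e \<ge> 1 \<or> h \<ge> 1" "i \<in> clients"
  shows "ZZ s t e i = ZZ s' t e i"
proof (cases e)
  case 0
  have "avgC C (grp C N i) (\<lambda>i'. G i' (XB s t) (s t 0 i' 0)) = avgC C (grp C N i) (\<lambda>i'. G i' (XB s t) (s' t 0 i' 0))"
    using grp_clients[OF assms(4)] C_subset_clients[of "grp C N i"] assms 0 E_pos H_pos
    by (intro avgC_cong) (auto simp: agree_before_def sample_before_def)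
  then show ?thesis
    using 0 XB_agree[OF assms(1)] assms E_pos H_pos by (auto simp: ZZ_0 agree_before_def sample_before_def)
next
  case (Suc e1)
  have "\<forall>j<N. YB s t j = YB s' t j" using YB_agree[OF assms(1)] Suc by auto
  then have "snd (mtgc_inner G C N \<gamma> H (s t) (XB s t) (YB s t) e) i
      = snd (mtgc_inner G C N \<gamma> H (s' t) (XB s t) (YB s' t) e) i"
    by (intro conjunct2[OF mtgc_inner_cong, rule_format])
       (use assms Suc E_pos H_pos in \<open>auto simp: agree_before_def sample_before_def\<close>)
  then show ?thesis unfolding zz_def XB_agree[OF assms(1)] .
qed

lemma XL_agree:
  assumes "agree_before s s' t e h" "e < E" "h \<le> H" "i \<in> clients"
  shows "XL s t e i h = XL s' t e i h"
proof (cases h)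
  case 0 then show ?thesis using XJ_agree[of s s' t e] assms grp_clients by (simp add: XL_0)
next
  case (Suc h1)
  have "agree_before s s' t e 0"
    using assms(1) by (auto simp: agree_before_def sample_before_def)
  then have "XL s t e i h = mtgc_local G \<gamma> i (s t e i) (XJ s' t e (grp C N i)) (ZZ s' t e i) (YB s' t (grp C N i)) h"
    unfolding xloc_def
    using XJ_agree[of s s' t e "grp C N i"] ZZ_agree[OF assms(1,2) _ assms(4)] YB_agree[OF assms(1), of "grp C N i"]
      grp_clients[OF assms(4)] assms Suc by simp
  also have "\<dots> = XL s' t e i h" unfolding xloc_def
    using assms by (intro mtgc_local_cong) (auto simp: agree_before_def sample_before_def)
  finally show ?thesis .
qed

lemma XH_agree: "agree_before s s' t e 0 \<Longrightarrow> e \<le> E \<Longrightarrow> XH s t e = XH s' t e"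
  unfolding XH_eq using XJ_agree by (intro avgN_cong) auto

end

locale mtgc_stoch = mtgc C N G \<gamma> H E x0
  for C :: "nat \<Rightarrow> 'c set" and N :: nat and G :: "'c \<Rightarrow> 'a::euclidean_space \<Rightarrow> 's \<Rightarrow> 'a"
    and \<gamma> :: real and H E :: nat and x0 :: 'a +
  fixes F :: "'c \<Rightarrow> 'a \<Rightarrow> real" and gradF :: "'c \<Rightarrow> 'a \<Rightarrow> 'a"
    and D :: "'c \<Rightarrow> 's measure" and L \<sigma> :: real and T :: nat
  assumes gamma_pos: "\<gamma> > 0"
    and D_prob: "\<forall>i\<in>clients. prob_space (D i)"
    and G_meas: "\<forall>i\<in>clients. (\<lambda>p. G i (fst p) (snd p)) \<in> borel_measurable ((borel :: 'a measure) \<Otimes>\<^sub>M D i)"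
    and A1_diff: "\<forall>i\<in>clients. \<forall>x. GDERIV (F i) x :> gradF i x"
    and A1_smooth: "\<forall>i\<in>clients. \<forall>x y. norm (gradF i x - gradF i y) \<le> L * norm (x - y)"
    and A2_unbiased: "\<forall>i\<in>clients. \<forall>x. integrable (D i) (G i x) \<and> (\<integral>z. G i x z \<partial>D i) = gradF i x"
    and A2_var: "\<forall>i\<in>clients. \<forall>x. (\<integral>\<^sup>+z. ennreal ((norm (G i x z - gradF i x))\<^sup>2) \<partial>D i) \<le> ennreal (\<sigma>\<^sup>2)"
    and step: "2 * real H * L * \<gamma> \<le> 1"
begin

text \<open>Coordinates of clients outside the groups never occur; they get a dummy point mass so that
  every factor is a probability space.\<close>
definition sample_law :: "nat \<times> nat \<times> 'c \<times> nat \<Rightarrow> 's measure" where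
  "sample_law = (\<lambda>(t, e, i, h). if i \<in> clients then D i else return (count_space UNIV) undefined)"

definition samples :: "(nat \<times> nat \<times> 'c \<times> nat) set" where
  "samples = {(t, e, i, h). t \<le> T \<and> i \<in> clients \<and> e < E \<and> h < H}"

abbreviation P where "P \<equiv> \<Pi>\<^sub>M c\<in>samples. sample_law c"

definition path :: "(nat \<times> nat \<times> 'c \<times> nat \<Rightarrow> 's) \<Rightarrow> nat \<Rightarrow> nat \<Rightarrow> 'c \<Rightarrow> nat \<Rightarrow> 's" where
  "path w = (\<lambda>t e i h. w (t, e, i, h))"

lemma sample_law_client: "i \<in> clients \<Longrightarrow> sample_law (t, e, i, h) = D i"
  by (simp add: sample_law_def)

lemma prob_space_sample_law: "prob_space (sample_law c)"
  using D_prob by (auto simp: sample_law_def intro: prob_space_return split: prod.splits)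

lemma in_samples: "t \<le> T \<Longrightarrow> i \<in> clients \<Longrightarrow> e < E \<Longrightarrow> h < H \<Longrightarrow> (t, e, i, h) \<in> samples"
  by (simp add: samples_def)

lemma finite_samples: "finite samples"
proof (rule finite_subset)
  show "samples \<subseteq> {..T} \<times> {..<E} \<times> clients \<times> {..<H}" by (auto simp: samples_def)
qed (use finite_clients in auto)

sublocale samples: finite_product_prob_space sample_law samples
  by (intro finite_product_prob_space.intro finite_product_sigma_finite.intro product_prob_space.intro
      product_sigma_finite.intro finite_product_sigma_finite_axioms.intro product_prob_space_axioms.intro)
     (simp_all add: finite_samples prob_space_sample_law prob_space_imp_sigma_finite)

lemma L_nonneg: "0 \<le> L"
  using clients_nonempty A1_smooth lipschitz_constant_nonneg by blast

lemma gradF_lipschitz: "i \<in> clients \<Longrightarrow> norm (gradF i x - gradF i y) \<le> L * norm (x - y)"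
  using A1_smooth by blast

lemma gradF_borel: "i \<in> clients \<Longrightarrow> gradF i \<in> borel_measurable borel"
  by (rule lipschitz_borel_measurable[OF gradF_lipschitz])

lemma sq_integrable_gradF: "i \<in> clients \<Longrightarrow> sq_integrable P X \<Longrightarrow> sq_integrable P (\<lambda>w. gradF i (X w))"
  by (rule sq_integrable_lipschitz_comp[OF samples.finite_measure_axioms _ gradF_lipschitz])

lemma integrable_F:
  assumes i: "i \<in> clients" and X: "sq_integrable P X"
  shows "integrable P (\<lambda>w. F i (X w))"
proof -
  have deriv: "\<And>x. GDERIV (F i) x :> gradF i x"
    using A1_diff i by blast
  have "continuous_on UNIV (F i)"
    using deriv unfolding gderiv_def
    by (intro has_derivative_continuous_on[where f'="\<lambda>x h. inner h (gradF i x)"])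
       (auto intro: has_derivative_at_withinI)
  then show ?thesis
    using integrable_quadratic_growth_comp[OF samples.finite_measure_axioms X]
      smooth_quadratic_growth[OF deriv gradF_lipschitz[OF i] L_nonneg] by blast
qed

lemma sample_noise_second_moment:
  assumes "t \<le> T" "i \<in> clients" "e < E" "h < H"
    and X: "sq_integrable P X" "ignores_coord (t, e, i, h) X"
  shows "sq_integrable P (\<lambda>w. G i (X w) (w (t, e, i, h)) - gradF i (X w))"
    and "(\<integral>w. (norm (G i (X w) (w (t, e, i, h)) - gradF i (X w)))\<^sup>2 \<partial>P) \<le> \<sigma>\<^sup>2"
  using samples.coord_noise_second_moment[of "(t, e, i, h)" X "G i" "gradF i" \<sigma>] assms
    G_meas A2_var gradF_borel
  by (auto simp: in_samples sample_law_client sq_integrable_def)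

lemma sq_integrable_sample_gradient:
  assumes "t \<le> T" "i \<in> clients" "e < E" "h < H"
    and X: "sq_integrable P X" "ignores_coord (t, e, i, h) X"
  shows "sq_integrable P (\<lambda>w. G i (X w) (w (t, e, i, h)))"
  using sq_integrable_add[OF sample_noise_second_moment(1)[OF assms] sq_integrable_gradF[OF assms(2) X(1)]]
  by simp

lemma sample_noise_orthogonal:
  assumes "t \<le> T" "i \<in> clients" "e < E" "h < H"
    and X: "sq_integrable P X" "ignores_coord (t, e, i, h) X"
    and V: "sq_integrable P V" "ignores_coord (t, e, i, h) V"
  shows "(\<integral>w. inner (V w) (G i (X w) (w (t, e, i, h)) - gradF i (X w)) \<partial>P) = 0"
  using samples.coord_noise_orthogonal[OF _ X(2) V sample_noise_second_moment(1)[OF assms(1-6)]]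
    A2_unbiased assms(1-4)
  by (simp add: in_samples sample_law_client)

lemma path_apply: "path w t e i h = w (t, e, i, h)"
  by (simp add: path_def)

lemma agree_before_upd:
  "\<not> sample_before t' e' h' t e h \<Longrightarrow> agree_before (path (w((t', e', i', h') := y))) (path w) t e h"
  unfolding agree_before_def path_def by auto

lemma ignores_XL:
  "\<not> sample_before t' e' h' t e h \<Longrightarrow> e < E \<Longrightarrow> h \<le> H \<Longrightarrow> i \<in> clients
    \<Longrightarrow> ignores_coord (t', e', i', h') (\<lambda>w. XL (path w) t e i h)"
  unfolding ignores_coord_def using XL_agree agree_before_upd by blast

lemma ignores_XH:
  "\<not> sample_before t' e' h' t e 0 \<Longrightarrow> e \<le> E \<Longrightarrow> ignores_coord (t', e', i', h') (\<lambda>w. XH (path w) t e)"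
  unfolding ignores_coord_def using XH_agree agree_before_upd by blast

lemma ignores_XB:
  assumes "t \<le> t'"
  shows "ignores_coord (t', e', i', h') (\<lambda>w. XB (path w) t)"
  unfolding ignores_coord_def
proof (intro allI)
  fix w y
  have "agree_before (path (w((t', e', i', h') := y))) (path w) t 0 0"
    using assms by (intro agree_before_upd) (auto simp: sample_before_def)
  then show "XB (path (w((t', e', i', h') := y))) t = XB (path w) t" by (rule XB_agree)
qed

lemma sq_integrable_XL_upto:
  assumes t: "t \<le> T" and e: "e < E" and i: "i \<in> clients"
    and x: "sq_integrable P (\<lambda>w. XJ (path w) t e (grp C N i))" and z: "sq_integrable P (\<lambda>w. ZZ (path w) t e i)"
    and y: "sq_integrable P (\<lambda>w. YB (path w) t (grp C N i))"
  shows "h \<le> H \<Longrightarrow> sq_integrable P (\<lambda>w. XL (path w) t e i h)"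
proof (induction h)
  case 0 then show ?case using x by (simp add: XL_0)
next
  case (Suc h)
  have "sq_integrable P (\<lambda>w. G i (XL (path w) t e i h) (w (t, e, i, h)))"
    using Suc t e i by (intro sq_integrable_sample_gradient ignores_XL) (auto simp: sample_before_def)
  then have "sq_integrable P (\<lambda>w. G i (XL (path w) t e i h) (path w t e i h))"
    by (simp only: path_apply)
  then show ?case unfolding XL_Suc
    using Suc z y by (intro sq_integrable_diff sq_integrable_scaleR sq_integrable_add) auto
qed

lemma sq_integrable_inner_round:
  assumes t: "t \<le> T" and xb: "sq_integrable P (\<lambda>w. XB (path w) t)"
    and yb: "\<forall>j<N. sq_integrable P (\<lambda>w. YB (path w) t j)"
  shows "e \<le> E \<Longrightarrow> (\<forall>j<N. sq_integrable P (\<lambda>w. XJ (path w) t e j)) \<and> (\<forall>i\<in>clients. sq_integrable P (\<lambda>w. ZZ (path w) t e i))"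
proof (induction e)
  case 0
  have "sq_integrable P (\<lambda>w. G i (XB (path w) t) (w (t, 0, i, 0)))" if "i \<in> clients" for i
    using E_pos H_pos that t by (intro sq_integrable_sample_gradient xb ignores_XB) auto
  then have "sq_integrable P (\<lambda>w. ZZ (path w) t 0 i)" if "i \<in> clients" for i
    unfolding ZZ_0 using grp_clients[OF that] C_subset_clients that
    by (intro sq_integrable_add sq_integrable_uminus sq_integrable_avgC) (auto simp: path_apply)
  then show ?case using xb by (simp add: XJ_0)
next
  case (Suc e)
  then have IH: "\<forall>j<N. sq_integrable P (\<lambda>w. XJ (path w) t e j)" "\<forall>i\<in>clients. sq_integrable P (\<lambda>w. ZZ (path w) t e i)"
    and e: "e < E" by auto
  have XL: "sq_integrable P (\<lambda>w. XL (path w) t e i H)" if "i \<in> clients" for i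
    using IH yb grp_clients[OF that] that by (intro sq_integrable_XL_upto t e that) auto
  then have XJ: "\<forall>j<N. sq_integrable P (\<lambda>w. XJ (path w) t (Suc e) j)"
    unfolding XJ_Suc using C_subset_clients by (auto intro!: sq_integrable_avgC)
  have "sq_integrable P (\<lambda>w. ZZ (path w) t (Suc e) i)" if "i \<in> clients" for i
    unfolding ZZ_Suc using IH XL XJ grp_clients[OF that] that
    by (intro sq_integrable_add sq_integrable_scaleR sq_integrable_diff) auto
  then show ?case using XJ by auto
qed

lemma sq_integrable_round:
  "t \<le> T \<Longrightarrow> sq_integrable P (\<lambda>w. XB (path w) t) \<and> (\<forall>j<N. sq_integrable P (\<lambda>w. YB (path w) t j))"
proof (induction t)
  case 0
  have "sq_integrable P (\<lambda>w. G i x0 (w (0, 0, i, 0)))" if "i \<in> clients" for i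
    using E_pos H_pos that
    by (intro sq_integrable_sample_gradient sq_integrable_const samples.finite_measure_axioms)
       (auto simp: ignores_coord_def)
  then have "sq_integrable P (\<lambda>w. YB (path w) 0 j)" if "j < N" for j
    unfolding YB_0 using C_subset_clients that
    by (intro sq_integrable_add sq_integrable_uminus sq_integrable_avgC sq_integrable_avgN) (auto simp: path_apply)
  then show ?case by (simp add: XB_0 sq_integrable_const samples.finite_measure_axioms)
next
  case (Suc t)
  then have t: "t \<le> T"
    and IH: "sq_integrable P (\<lambda>w. XB (path w) t)" "\<forall>j<N. sq_integrable P (\<lambda>w. YB (path w) t j)" by auto
  have XJ: "\<forall>j<N. sq_integrable P (\<lambda>w. XJ (path w) t E j)"
    using sq_integrable_inner_round[OF t IH] by auto
  then have XB: "sq_integrable P (\<lambda>w. XB (path w) (Suc t))"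
    unfolding XB_Suc by (intro sq_integrable_avgN) auto
  have "sq_integrable P (\<lambda>w. YB (path w) (Suc t) j)" if "j < N" for j
    unfolding YB_Suc using IH XJ XB that by (intro sq_integrable_add sq_integrable_scaleR sq_integrable_diff) auto
  then show ?case using XB by auto
qed

lemma sq_integrable_XJ: "t \<le> T \<Longrightarrow> e \<le> E \<Longrightarrow> j < N \<Longrightarrow> sq_integrable P (\<lambda>w. XJ (path w) t e j)"
  using sq_integrable_inner_round sq_integrable_round by blast

lemma sq_integrable_XL:
  "t \<le> T \<Longrightarrow> e < E \<Longrightarrow> i \<in> clients \<Longrightarrow> h \<le> H \<Longrightarrow> sq_integrable P (\<lambda>w. XL (path w) t e i h)"
  using grp_clients[of i] sq_integrable_inner_round sq_integrable_round
  by (intro sq_integrable_XL_upto sq_integrable_XJ) auto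

lemma sq_integrable_XH: "t \<le> T \<Longrightarrow> e \<le> E \<Longrightarrow> sq_integrable P (\<lambda>w. XH (path w) t e)"
  unfolding XH_eq by (intro sq_integrable_avgN sq_integrable_XJ) auto

lemma sq_integrable_gradglob: "sq_integrable P X \<Longrightarrow> sq_integrable P (\<lambda>w. gradglob C N gradF (X w))"
  unfolding gradglob_def using C_subset_clients
  by (intro sq_integrable_avgN sq_integrable_avgC sq_integrable_gradF) auto

lemma integrable_fglob: "sq_integrable P X \<Longrightarrow> integrable P (\<lambda>w. fglob C N F (X w))"
  unfolding fglob_def using C_subset_clients
  by (intro integrable_avgN integrable_avgC integrable_F) auto

end

lemma descent_step_split:
  fixes a b n :: "'a::real_inner" and K \<gamma> L :: real
  assumes K: "K > 0" and \<gamma>: "\<gamma> > 0" and L: "L \<ge> 0" and step: "2 * K * L * \<gamma> \<le> 1"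
  shows "inner a (- \<gamma> *\<^sub>R (K *\<^sub>R b + n)) + L / 2 * (norm (- \<gamma> *\<^sub>R (K *\<^sub>R b + n)))\<^sup>2
     \<le> - (\<gamma> * K / 2) * (norm a)\<^sup>2 + (\<gamma> * K / 2) * (norm (a - b))\<^sup>2 - \<gamma> * inner a n + L * \<gamma>\<^sup>2 * (norm n)\<^sup>2"
proof -
  have polar: "(norm (a - b))\<^sup>2 = (norm a)\<^sup>2 - 2 * inner a b + (norm b)\<^sup>2"
    by (simp add: power2_norm_eq_inner inner_diff_left inner_diff_right inner_commute)
  have "(norm (K *\<^sub>R b + n))\<^sup>2 \<le> 2 * (K\<^sup>2 * (norm b)\<^sup>2) + 2 * (norm n)\<^sup>2"
    using norm_add_squared_le[of "K *\<^sub>R b" n] K by (simp add: power_mult_distrib)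
  then have "L / 2 * (\<gamma>\<^sup>2 * (norm (K *\<^sub>R b + n))\<^sup>2) \<le> L / 2 * (\<gamma>\<^sup>2 * (2 * (K\<^sup>2 * (norm b)\<^sup>2) + 2 * (norm n)\<^sup>2))"
    using L by (intro mult_left_mono) auto
  moreover have "(norm (- \<gamma> *\<^sub>R (K *\<^sub>R b + n)))\<^sup>2 = \<gamma>\<^sup>2 * (norm (K *\<^sub>R b + n))\<^sup>2"
    by (simp only: norm_scaleR power_mult_distrib power2_abs power2_minus)
  ultimately have "L / 2 * (norm (- \<gamma> *\<^sub>R (K *\<^sub>R b + n)))\<^sup>2 \<le> L * \<gamma>\<^sup>2 * K\<^sup>2 * (norm b)\<^sup>2 + L * \<gamma>\<^sup>2 * (norm n)\<^sup>2"
    by (simp add: algebra_simps)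
  moreover have "L * \<gamma>\<^sup>2 * K\<^sup>2 * (norm b)\<^sup>2 \<le> \<gamma> * K / 2 * (norm b)\<^sup>2"
  proof -
    have "L * \<gamma>\<^sup>2 * K\<^sup>2 * (norm b)\<^sup>2 = (2 * K * L * \<gamma>) * (\<gamma> * K / 2 * (norm b)\<^sup>2)"
      by (simp add: power2_eq_square algebra_simps)
    also have "\<dots> \<le> \<gamma> * K / 2 * (norm b)\<^sup>2"
      using step K \<gamma> L by (intro mult_left_le_one_le) auto
    finally show ?thesis .
  qed
  moreover have "inner a (- \<gamma> *\<^sub>R (K *\<^sub>R b + n)) = - \<gamma> * K * inner a b - \<gamma> * inner a n"
    by (simp add: inner_add_right algebra_simps)
  ultimately show ?thesis unfolding polar by (simp add: algebra_simps)
qed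

context mtgc_stoch
begin

lemma fglob_descent:
  "fglob C N F y \<le> fglob C N F x + inner (gradglob C N gradF x) (y - x) + L / 2 * (norm (y - x))\<^sup>2"
proof -
  have "fglob C N F y \<le> avgN N (\<lambda>j. avgC C j (\<lambda>i. F i x + inner (gradF i x) (y - x) + L / 2 * (norm (y - x))\<^sup>2))"
    unfolding fglob_def
  proof (intro avgN_mono avgC_mono)
    fix j i assume "j < N" "i \<in> C j"
    then have "i \<in> clients" using C_subset_clients by auto
    then show "F i y \<le> F i x + inner (gradF i x) (y - x) + L / 2 * (norm (y - x))\<^sup>2"
      using A1_diff gradF_lipschitz by (intro lipschitz_gradient_descent) auto
  qed
  also have "\<dots> = fglob C N F x + inner (gradglob C N gradF x) (y - x) + L / 2 * (norm (y - x))\<^sup>2"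
    by (simp add: avgC_add avgC_const avgN_add avgN_const fglob_def gradglob_def inner_avgN_left inner_avgC_left
        cong: avgN_cong)
  finally show ?thesis .
qed

definition local_grad :: "(nat \<Rightarrow> nat \<Rightarrow> 'c \<Rightarrow> nat \<Rightarrow> 's) \<Rightarrow> nat \<Rightarrow> nat \<Rightarrow> nat \<Rightarrow> 'a" where
  "local_grad s t e h = avgN N (\<lambda>j. avgC C j (\<lambda>i. gradF i (XL s t e i h)))"

definition local_noise :: "(nat \<Rightarrow> nat \<Rightarrow> 'c \<Rightarrow> nat \<Rightarrow> 's) \<Rightarrow> nat \<Rightarrow> nat \<Rightarrow> nat \<Rightarrow> 'a" where
  "local_noise s t e h = avgN N (\<lambda>j. avgC C j (\<lambda>i. G i (XL s t e i h) (s t e i h) - gradF i (XL s t e i h)))"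

definition drift :: "(nat \<Rightarrow> nat \<Rightarrow> 'c \<Rightarrow> nat \<Rightarrow> 's) \<Rightarrow> nat \<Rightarrow> nat \<Rightarrow> nat \<Rightarrow> real" where
  "drift s t e h = avgN N (\<lambda>j. avgC C j (\<lambda>i. (norm (XH s t e - XJ s t e j))\<^sup>2 + (norm (XJ s t e j - XL s t e i h))\<^sup>2))"

lemma XH_Suc_split:
  "XH s t (Suc e) = XH s t e + (- \<gamma>) *\<^sub>R (real H *\<^sub>R ((1 / real H) *\<^sub>R (\<Sum>h<H. local_grad s t e h)) + (\<Sum>h<H. local_noise s t e h))"
proof -
  have "local_grad s t e h + local_noise s t e h = avgN N (\<lambda>j. avgC C j (\<lambda>i. G i (XL s t e i h) (s t e i h)))" for h
    by (simp add: local_grad_def local_noise_def avgN_add[symmetric] avgC_add[symmetric])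
  then show ?thesis
    using H_pos by (simp add: XH_Suc sum.distrib[symmetric])
qed

lemma norm_gradglob_diff_local_grad:
  "(norm (gradglob C N gradF (XH s t e) - local_grad s t e h))\<^sup>2 \<le> 2 * L\<^sup>2 * drift s t e h"
proof -
  let ?x = "XH s t e"
  have "(norm (gradglob C N gradF ?x - local_grad s t e h))\<^sup>2
      \<le> avgN N (\<lambda>j. (norm (avgC C j (\<lambda>i. gradF i ?x - gradF i (XL s t e i h))))\<^sup>2)"
    unfolding gradglob_def local_grad_def avgN_diff[symmetric] avgC_diff[symmetric] by (rule norm_avgN_squared_le)
  also have "\<dots> \<le> avgN N (\<lambda>j. avgC C j (\<lambda>i. (norm (gradF i ?x - gradF i (XL s t e i h)))\<^sup>2))"
    by (intro avgN_mono norm_avgC_squared_le)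
  also have "\<dots> \<le> avgN N (\<lambda>j. avgC C j (\<lambda>i. 2 * L\<^sup>2 * ((norm (?x - XJ s t e j))\<^sup>2 + (norm (XJ s t e j - XL s t e i h))\<^sup>2)))"
  proof (intro avgN_mono avgC_mono)
    fix j i assume "j < N" "i \<in> C j"
    then have "i \<in> clients" using C_subset_clients by auto
    then have "(norm (gradF i ?x - gradF i (XL s t e i h)))\<^sup>2 \<le> (L * norm ((?x - XJ s t e j) + (XJ s t e j - XL s t e i h)))\<^sup>2"
      using gradF_lipschitz by (intro power_mono) auto
    also have "\<dots> \<le> L\<^sup>2 * (2 * (norm (?x - XJ s t e j))\<^sup>2 + 2 * (norm (XJ s t e j - XL s t e i h))\<^sup>2)"
      unfolding power_mult_distrib by (intro mult_left_mono norm_add_squared_le) auto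
    finally show "(norm (gradF i ?x - gradF i (XL s t e i h)))\<^sup>2
        \<le> 2 * L\<^sup>2 * ((norm (?x - XJ s t e j))\<^sup>2 + (norm (XJ s t e j - XL s t e i h))\<^sup>2)"
      by (simp add: algebra_simps)
  qed
  also have "\<dots> = 2 * L\<^sup>2 * drift s t e h"
    by (simp add: drift_def avgC_mult avgN_mult)
  finally show ?thesis .
qed

lemma norm_gradglob_diff_avg_local_grad:
  "(norm (gradglob C N gradF (XH s t e) - (1 / real H) *\<^sub>R (\<Sum>h<H. local_grad s t e h)))\<^sup>2
     \<le> 2 * L\<^sup>2 / real H * (\<Sum>h<H. drift s t e h)"
proof -
  let ?a = "gradglob C N gradF (XH s t e)"
  have "?a - (1 / real H) *\<^sub>R (\<Sum>h<H. local_grad s t e h) = (1 / real (card {..<H})) *\<^sub>R (\<Sum>h<H. ?a - local_grad s t e h)"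
    using H_pos by (simp add: sum_subtractf scaleR_diff_right sum_constant_scaleR)
  then have "(norm (?a - (1 / real H) *\<^sub>R (\<Sum>h<H. local_grad s t e h)))\<^sup>2
      \<le> (1 / real H) * (\<Sum>h<H. (norm (?a - local_grad s t e h))\<^sup>2)"
    using norm_average_squared_le[of "{..<H}" "\<lambda>h. ?a - local_grad s t e h"] H_pos by simp
  also have "\<dots> \<le> (1 / real H) * (\<Sum>h<H. 2 * L\<^sup>2 * drift s t e h)"
    by (intro mult_left_mono sum_mono norm_gradglob_diff_local_grad) auto
  finally show ?thesis by (simp add: sum_distrib_left)
qed

lemma virtual_descent_step:
  "fglob C N F (XH s t (Suc e)) \<le> fglob C N F (XH s t e) - (\<gamma> * real H / 2) * (norm (gradglob C N gradF (XH s t e)))\<^sup>2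
     + \<gamma> * L\<^sup>2 * (\<Sum>h<H. drift s t e h)
     - \<gamma> * inner (gradglob C N gradF (XH s t e)) (\<Sum>h<H. local_noise s t e h)
     + L * \<gamma>\<^sup>2 * (norm (\<Sum>h<H. local_noise s t e h))\<^sup>2"
proof -
  let ?a = "gradglob C N gradF (XH s t e)"
  let ?b = "(1 / real H) *\<^sub>R (\<Sum>h<H. local_grad s t e h)"
  let ?n = "\<Sum>h<H. local_noise s t e h"
  have H: "real H > 0" using H_pos by simp
  have "fglob C N F (XH s t (Suc e))
      \<le> fglob C N F (XH s t e) + inner ?a (- \<gamma> *\<^sub>R (real H *\<^sub>R ?b + ?n)) + L / 2 * (norm (- \<gamma> *\<^sub>R (real H *\<^sub>R ?b + ?n)))\<^sup>2"
    using fglob_descent[of "XH s t (Suc e)" "XH s t e"] unfolding XH_Suc_split by simp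
  also have "\<dots> \<le> fglob C N F (XH s t e) - (\<gamma> * real H / 2) * (norm ?a)\<^sup>2 + (\<gamma> * real H / 2) * (norm (?a - ?b))\<^sup>2
      - \<gamma> * inner ?a ?n + L * \<gamma>\<^sup>2 * (norm ?n)\<^sup>2"
    using descent_step_split[OF H gamma_pos L_nonneg step, of ?a ?b ?n] by simp
  also have "(\<gamma> * real H / 2) * (norm (?a - ?b))\<^sup>2 \<le> (\<gamma> * real H / 2) * (2 * L\<^sup>2 / real H * (\<Sum>h<H. drift s t e h))"
    using gamma_pos H by (intro mult_left_mono norm_gradglob_diff_avg_local_grad) auto
  also have "\<dots> = \<gamma> * L\<^sup>2 * (\<Sum>h<H. drift s t e h)"
    using H by simp
  finally show ?thesis by simp
qed

end

section \<open>The sampling noise\<close>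

context mtgc_stoch
begin

definition sample_noise :: "nat \<Rightarrow> 'c \<Rightarrow> nat \<Rightarrow> (nat \<times> nat \<times> 'c \<times> nat \<Rightarrow> 's) \<Rightarrow> 'a" where
  "sample_noise e i h w = G i (XL (path w) T e i h) (w (T, e, i, h)) - gradF i (XL (path w) T e i h)"

lemma local_noise_eq_sum_sample_noise:
  "(\<Sum>h<H. local_noise (path w) T e h)
     = (\<Sum>(h, i)\<in>{..<H} \<times> clients. client_weight i *\<^sub>R sample_noise e i h w)"
  unfolding local_noise_def avgN_avgC_eq_sum_clients sample_noise_def
  by (simp add: sum.cartesian_product path_apply)

lemma ignores_sample_noise:
  assumes "e < E" "i \<in> clients" "h < H" "h \<le> h'" "(i, h) \<noteq> (i', h')"
  shows "ignores_coord (T, e, i', h') (sample_noise e i h)"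
proof -
  have "ignores_coord (T, e, i', h') (\<lambda>w. XL (path w) T e i h)"
    using assms by (intro ignores_XL) (auto simp: sample_before_def)
  then show ?thesis
    using assms(5) unfolding ignores_coord_def sample_noise_def by auto
qed

lemma sample_noise_moments:
  assumes "e < E" "i \<in> clients" "h < H"
  shows "sq_integrable P (sample_noise e i h)"
    and "(\<integral>w. (norm (sample_noise e i h w))\<^sup>2 \<partial>P) \<le> \<sigma>\<^sup>2"
  using sample_noise_second_moment[OF order_refl assms(2,1,3) sq_integrable_XL ignores_XL] assms
  by (auto simp: sample_noise_def[abs_def] sample_before_def)

lemma sample_noise_orthogonal_ordered:
  assumes "e < E" "i \<in> clients" "i' \<in> clients" "h \<le> h'" "h' < H" "(i, h) \<noteq> (i', h')"
  shows "(\<integral>w. inner (sample_noise e i h w) (sample_noise e i' h' w) \<partial>P) = 0"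
  using sample_noise_orthogonal[OF order_refl assms(3,1,5) sq_integrable_XL ignores_XL
      sample_noise_moments(1) ignores_sample_noise] assms
  by (auto simp: sample_noise_def[abs_def] sample_before_def)

lemma sample_noise_orthogonal_pair:
  assumes "e < E" "(h, i) \<in> {..<H} \<times> clients" "(h', i') \<in> {..<H} \<times> clients" "(h, i) \<noteq> (h', i')"
  shows "(\<integral>w. inner (sample_noise e i h w) (sample_noise e i' h' w) \<partial>P) = 0"
proof (cases "h \<le> h'")
  case True then show ?thesis using assms by (intro sample_noise_orthogonal_ordered) auto
next
  case False
  then have "(\<integral>w. inner (sample_noise e i' h' w) (sample_noise e i h w) \<partial>P) = 0"
    using assms by (intro sample_noise_orthogonal_ordered) auto
  then show ?thesis by (simp add: inner_commute)
qed

lemma expected_norm_local_noise: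
  assumes e: "e < E"
  shows "integrable P (\<lambda>w. (norm (\<Sum>h<H. local_noise (path w) T e h))\<^sup>2)"
    and "(\<integral>w. (norm (\<Sum>h<H. local_noise (path w) T e h))\<^sup>2 \<partial>P)
      \<le> real H * (1 / (real N)\<^sup>2 * (\<Sum>j<N. 1 / real (card (C j)))) * \<sigma>\<^sup>2"
proof -
  let ?K = "{..<H} \<times> clients"
  let ?c = "\<lambda>(h, i). client_weight i" and ?\<nu> = "\<lambda>(h, i). sample_noise e i h"
  have sum: "(\<Sum>h<H. local_noise (path w) T e h) = (\<Sum>k\<in>?K. ?c k *\<^sub>R ?\<nu> k w)" for w
    unfolding local_noise_eq_sum_sample_noise by (simp add: case_prod_unfold)
  have sq: "sq_integrable P (?\<nu> k)" if "k \<in> ?K" for k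
    using that e sample_noise_moments(1) by auto
  show "integrable P (\<lambda>w. (norm (\<Sum>h<H. local_noise (path w) T e h))\<^sup>2)"
    unfolding sum using sq by (intro sq_integrableD(2) sq_integrable_sum sq_integrable_scaleR) auto
  have orth: "(\<integral>w. inner (?\<nu> k w) (?\<nu> k' w) \<partial>P) = 0" if "k \<in> ?K" "k' \<in> ?K" "k \<noteq> k'" for k k'
    using that sample_noise_orthogonal_pair[OF e] by (cases k; cases k') auto
  have "(\<integral>w. (norm (\<Sum>h<H. local_noise (path w) T e h))\<^sup>2 \<partial>P) = (\<Sum>k\<in>?K. (?c k)\<^sup>2 * (\<integral>w. (norm (?\<nu> k w))\<^sup>2 \<partial>P))"
    unfolding sum using finite_clients sq orth by (intro integral_norm_sum_orthogonal) auto
  also have "\<dots> \<le> (\<Sum>k\<in>?K. (?c k)\<^sup>2 * \<sigma>\<^sup>2)"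
    using e sample_noise_moments(2) by (intro sum_mono mult_left_mono) auto
  also have "\<dots> = (\<Sum>h<H. \<Sum>i\<in>clients. (client_weight i)\<^sup>2 * \<sigma>\<^sup>2)"
    by (simp add: sum.cartesian_product' case_prod_unfold)
  also have "\<dots> = real H * (\<Sum>i\<in>clients. (client_weight i)\<^sup>2) * \<sigma>\<^sup>2"
    by (simp add: sum_distrib_right)
  finally show "(\<integral>w. (norm (\<Sum>h<H. local_noise (path w) T e h))\<^sup>2 \<partial>P)
      \<le> real H * (1 / (real N)\<^sup>2 * (\<Sum>j<N. 1 / real (card (C j)))) * \<sigma>\<^sup>2"
    by (simp add: sum_client_weight_squared)
qed

lemma expected_inner_local_noise:
  assumes e: "e < E"
  shows "integrable P (\<lambda>w. inner (gradglob C N gradF (XH (path w) T e)) (\<Sum>h<H. local_noise (path w) T e h))"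
    and "(\<integral>w. inner (gradglob C N gradF (XH (path w) T e)) (\<Sum>h<H. local_noise (path w) T e h) \<partial>P) = 0"
proof -
  let ?V = "\<lambda>w. gradglob C N gradF (XH (path w) T e)"
  have V: "sq_integrable P ?V" using e by (intro sq_integrable_gradglob sq_integrable_XH) auto
  have sum: "inner (?V w) (\<Sum>h<H. local_noise (path w) T e h)
      = (\<Sum>(h, i)\<in>{..<H} \<times> clients. client_weight i * inner (?V w) (sample_noise e i h w))" for w
    unfolding local_noise_eq_sum_sample_noise by (simp add: inner_sum_right case_prod_unfold)
  have int: "integrable P (\<lambda>w. inner (?V w) (sample_noise e i h w))" if "h < H" "i \<in> clients" for h i
    using that e V sample_noise_moments(1) by (intro integrable_inner_sq_integrable) auto
  show "integrable P (\<lambda>w. inner (?V w) (\<Sum>h<H. local_noise (path w) T e h))"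
    unfolding sum case_prod_unfold using int
    by (intro Bochner_Integration.integrable_sum integrable_mult_right) auto
  have "(\<integral>w. inner (?V w) (sample_noise e i h w) \<partial>P) = 0" if "h < H" "i \<in> clients" for h i
    using sample_noise_orthogonal[OF order_refl that(2) e that(1) sq_integrable_XL ignores_XL V
        ignores_coord_comp[OF ignores_XH]] that e
    by (auto simp: sample_noise_def[abs_def] sample_before_def)
  then show "(\<integral>w. inner (?V w) (\<Sum>h<H. local_noise (path w) T e h) \<partial>P) = 0"
    unfolding sum case_prod_unfold using int
    by (subst Bochner_Integration.integral_sum) (auto intro!: integrable_mult_right sum.neutral)
qed

end

context mtgc_stoch
begin

definition group_deviation :: "nat \<Rightarrow> real" where
  "group_deviation e = avgN N (\<lambda>j. \<integral>w. (norm (XH (path w) T e - XJ (path w) T e j))\<^sup>2 \<partial>P)"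

definition client_deviation :: "nat \<Rightarrow> real" where
  "client_deviation e =
     avgN N (\<lambda>j. avgC C j (\<lambda>i. \<Sum>h<H. \<integral>w. (norm (XJ (path w) T e j - XL (path w) T e i h))\<^sup>2 \<partial>P))"

lemma sum_drift:
  "(\<Sum>h<H. drift s t e h) = real H * avgN N (\<lambda>j. (norm (XH s t e - XJ s t e j))\<^sup>2)
     + avgN N (\<lambda>j. avgC C j (\<lambda>i. \<Sum>h<H. (norm (XJ s t e j - XL s t e i h))\<^sup>2))"
proof -
  have "drift s t e h = avgN N (\<lambda>j. (norm (XH s t e - XJ s t e j))\<^sup>2)
      + avgN N (\<lambda>j. avgC C j (\<lambda>i. (norm (XJ s t e j - XL s t e i h))\<^sup>2))" for h
    by (simp add: drift_def avgC_add avgC_const avgN_add cong: avgN_cong)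
  then show ?thesis by (simp add: sum.distrib avgC_sum avgN_sum)
qed

lemma integral_sum_drift:
  assumes e: "e < E"
  shows "integrable P (\<lambda>w. \<Sum>h<H. drift (path w) T e h)"
    and "(\<integral>w. (\<Sum>h<H. drift (path w) T e h) \<partial>P) = real H * group_deviation e + client_deviation e"
proof -
  have a: "integrable P (\<lambda>w. (norm (XH (path w) T e - XJ (path w) T e j))\<^sup>2)" if "j < N" for j
    using e that by (intro sq_integrableD(2) sq_integrable_diff sq_integrable_XH sq_integrable_XJ) auto
  have b: "integrable P (\<lambda>w. (norm (XJ (path w) T e j - XL (path w) T e i h))\<^sup>2)"
    if "j < N" "i \<in> C j" "h < H" for j i h
    using e that C_subset_clients by (intro sq_integrableD(2) sq_integrable_diff sq_integrable_XL sq_integrable_XJ) auto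
  have avg_a: "integrable P (\<lambda>w. avgN N (\<lambda>j. (norm (XH (path w) T e - XJ (path w) T e j))\<^sup>2))"
    using a by (intro integrable_avgN)
  have avg_b: "integrable P (\<lambda>w. avgC C j (\<lambda>i. \<Sum>h<H. (norm (XJ (path w) T e j - XL (path w) T e i h))\<^sup>2))"
    if "j < N" for j
    using b that by (intro integrable_avgC Bochner_Integration.integrable_sum) auto
  show "integrable P (\<lambda>w. \<Sum>h<H. drift (path w) T e h)"
    unfolding sum_drift using a avg_b
    by (intro Bochner_Integration.integrable_add integrable_mult_right integrable_avgN) auto
  have "(\<integral>w. (\<Sum>h<H. drift (path w) T e h) \<partial>P)
      = real H * avgN N (\<lambda>j. \<integral>w. (norm (XH (path w) T e - XJ (path w) T e j))\<^sup>2 \<partial>P)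
        + avgN N (\<lambda>j. \<integral>w. avgC C j (\<lambda>i. \<Sum>h<H. (norm (XJ (path w) T e j - XL (path w) T e i h))\<^sup>2) \<partial>P)"
    unfolding sum_drift using a avg_a avg_b integrable_avgN[OF avg_b]
    by (simp add: integral_avgN)
  also have "avgN N (\<lambda>j. \<integral>w. avgC C j (\<lambda>i. \<Sum>h<H. (norm (XJ (path w) T e j - XL (path w) T e i h))\<^sup>2) \<partial>P)
      = client_deviation e"
    unfolding client_deviation_def
  proof (intro avgN_cong)
    fix j assume j: "j < N"
    have "(\<integral>w. avgC C j (\<lambda>i. \<Sum>h<H. (norm (XJ (path w) T e j - XL (path w) T e i h))\<^sup>2) \<partial>P)
        = avgC C j (\<lambda>i. \<integral>w. (\<Sum>h<H. (norm (XJ (path w) T e j - XL (path w) T e i h))\<^sup>2) \<partial>P)"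
      using b j by (intro integral_avgC Bochner_Integration.integrable_sum) auto
    also have "\<dots> = avgC C j (\<lambda>i. \<Sum>h<H. \<integral>w. (norm (XJ (path w) T e j - XL (path w) T e i h))\<^sup>2 \<partial>P)"
      using b j by (intro avgC_cong Bochner_Integration.integral_sum) auto
    finally show "(\<integral>w. avgC C j (\<lambda>i. \<Sum>h<H. (norm (XJ (path w) T e j - XL (path w) T e i h))\<^sup>2) \<partial>P)
        = avgC C j (\<lambda>i. \<Sum>h<H. \<integral>w. (norm (XJ (path w) T e j - XL (path w) T e i h))\<^sup>2 \<partial>P)" .
  qed
  finally show "(\<integral>w. (\<Sum>h<H. drift (path w) T e h) \<partial>P) = real H * group_deviation e + client_deviation e"
    by (simp add: group_deviation_def)
qed

lemma expected_virtual_descent_step: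
  assumes e: "e < E"
  shows "(\<integral>w. fglob C N F (XH (path w) T (Suc e)) \<partial>P) \<le> (\<integral>w. fglob C N F (XH (path w) T e) \<partial>P)
     - (\<gamma> * real H / 2) * (\<integral>w. (norm (gradglob C N gradF (XH (path w) T e)))\<^sup>2 \<partial>P)
     + \<gamma> * L\<^sup>2 * (real H * group_deviation e + client_deviation e)
     + L * \<gamma>\<^sup>2 * (real H * (1 / (real N)\<^sup>2 * (\<Sum>j<N. 1 / real (card (C j)))) * \<sigma>\<^sup>2)"
proof -
  let ?f = "\<lambda>w. fglob C N F (XH (path w) T e)"
  let ?g = "\<lambda>w. (norm (gradglob C N gradF (XH (path w) T e)))\<^sup>2"
  let ?d = "\<lambda>w. \<Sum>h<H. drift (path w) T e h"
  let ?i = "\<lambda>w. inner (gradglob C N gradF (XH (path w) T e)) (\<Sum>h<H. local_noise (path w) T e h)"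
  let ?n = "\<lambda>w. (norm (\<Sum>h<H. local_noise (path w) T e h))\<^sup>2"
  have XH: "sq_integrable P (\<lambda>w. XH (path w) T e)"
    using e by (intro sq_integrable_XH) auto
  have int: "integrable P ?f" "integrable P ?g" "integrable P ?d" "integrable P ?i" "integrable P ?n"
    using integrable_fglob[OF XH] sq_integrableD(2)[OF sq_integrable_gradglob[OF XH]] integral_sum_drift(1)[OF e]
      expected_inner_local_noise(1)[OF e] expected_norm_local_noise(1)[OF e]
    by auto
  have "(\<integral>w. fglob C N F (XH (path w) T (Suc e)) \<partial>P)
      \<le> (\<integral>w. ?f w - (\<gamma> * real H / 2) * ?g w + \<gamma> * L\<^sup>2 * ?d w - \<gamma> * ?i w + L * \<gamma>\<^sup>2 * ?n w \<partial>P)"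
    using e int by (intro integral_mono virtual_descent_step integrable_fglob sq_integrable_XH) auto
  also have "\<dots> = (\<integral>w. ?f w \<partial>P) - (\<gamma> * real H / 2) * (\<integral>w. ?g w \<partial>P) + \<gamma> * L\<^sup>2 * (\<integral>w. ?d w \<partial>P)
      - \<gamma> * (\<integral>w. ?i w \<partial>P) + L * \<gamma>\<^sup>2 * (\<integral>w. ?n w \<partial>P)"
    using int by simp
  also have "\<dots> \<le> (\<integral>w. ?f w \<partial>P) - (\<gamma> * real H / 2) * (\<integral>w. ?g w \<partial>P)
      + \<gamma> * L\<^sup>2 * (real H * group_deviation e + client_deviation e)
      + L * \<gamma>\<^sup>2 * (real H * (1 / (real N)\<^sup>2 * (\<Sum>j<N. 1 / real (card (C j)))) * \<sigma>\<^sup>2)"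
    using integral_sum_drift(2)[OF e] expected_inner_local_noise(2)[OF e]
      mult_left_mono[OF expected_norm_local_noise(2)[OF e], of "L * \<gamma>\<^sup>2"] L_nonneg
    by simp
  finally show ?thesis .
qed

lemma expected_round_descent:
  "(\<integral>w. fglob C N F (XB (path w) (Suc T)) \<partial>P) \<le> (\<integral>w. fglob C N F (XB (path w) T) \<partial>P)
     - \<gamma> * real H / 2 * (\<Sum>e<E. \<integral>w. (norm (gradglob C N gradF (XH (path w) T e)))\<^sup>2 \<partial>P)
     + \<gamma> * L\<^sup>2 * real H * ((\<Sum>e<E. client_deviation e) / real H + (\<Sum>e<E. group_deviation e))
     + \<gamma>\<^sup>2 * L * real E * real H * (1 / (real N)\<^sup>2) * (\<Sum>j<N. 1 / real (card (C j))) * \<sigma>\<^sup>2"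
proof -
  define c where "c = real H * (1 / (real N)\<^sup>2 * (\<Sum>j<N. 1 / real (card (C j)))) * \<sigma>\<^sup>2"
  define S where "S e = - (\<gamma> * real H / 2) * (\<integral>w. (norm (gradglob C N gradF (XH (path w) T e)))\<^sup>2 \<partial>P)
     + \<gamma> * L\<^sup>2 * (real H * group_deviation e + client_deviation e) + L * \<gamma>\<^sup>2 * c" for e
  have "m \<le> E \<Longrightarrow> (\<integral>w. fglob C N F (XH (path w) T m) \<partial>P) \<le> (\<integral>w. fglob C N F (XH (path w) T 0) \<partial>P) + (\<Sum>e<m. S e)"
    for m
  proof (induction m)
    case (Suc m)
    then show ?case
      using expected_virtual_descent_step[of m] unfolding S_def c_def by simp
  qed simp
  from this[of E] have "(\<integral>w. fglob C N F (XB (path w) (Suc T)) \<partial>P) \<le> (\<integral>w. fglob C N F (XB (path w) T) \<partial>P) + (\<Sum>e<E. S e)"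
    by (simp add: XH_0 XH_E)
  also have "(\<Sum>e<E. S e) = - \<gamma> * real H / 2 * (\<Sum>e<E. \<integral>w. (norm (gradglob C N gradF (XH (path w) T e)))\<^sup>2 \<partial>P)
     + \<gamma> * L\<^sup>2 * (real H * (\<Sum>e<E. group_deviation e) + (\<Sum>e<E. client_deviation e)) + real E * (L * \<gamma>\<^sup>2 * c)"
    unfolding S_def by (simp only: sum.distrib sum_distrib_left[symmetric] sum_constant) (simp add: algebra_simps)
  finally show ?thesis
    using H_pos by (simp add: c_def algebra_simps power2_eq_square)
qed

end

section \<open>Transport to the sample space\<close>

locale mtgc_sampled = mtgc_stoch C N G \<gamma> H E x0 F gradF D L \<sigma> T
  for C :: "nat \<Rightarrow> 'c set" and N :: nat and G :: "'c \<Rightarrow> 'a::euclidean_space \<Rightarrow> 's \<Rightarrow> 'a"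
    and \<gamma> :: real and H E :: nat and x0 :: 'a and F gradF D L \<sigma> T +
  fixes M :: "'m measure" and \<xi> :: "nat \<Rightarrow> nat \<Rightarrow> 'c \<Rightarrow> nat \<Rightarrow> 'm \<Rightarrow> 's"
  assumes M_prob: "prob_space M"
    and samples_distr: "\<forall>t' e i h. i \<in> clients \<and> e < E \<and> h < H \<longrightarrow>
                          \<xi> t' e i h \<in> measurable M (D i) \<and> distr M (D i) (\<xi> t' e i h) = D i"
    and samples_indep: "prob_space.indep_vars M (\<lambda>(t', e, i, h). D i) (\<lambda>(t', e, i, h). \<xi> t' e i h)
                          {(t', e, i, h). i \<in> clients \<and> e < E \<and> h < H}"
begin

definition agree_on_samples :: "(nat \<Rightarrow> nat \<Rightarrow> 'c \<Rightarrow> nat \<Rightarrow> 's) \<Rightarrow> (nat \<Rightarrow> nat \<Rightarrow> 'c \<Rightarrow> nat \<Rightarrow> 's) \<Rightarrow> bool" where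
  "agree_on_samples s s' \<longleftrightarrow> (\<forall>t e i h. (t, e, i, h) \<in> samples \<longrightarrow> s t e i h = s' t e i h)"

lemma samples_nonempty: "samples \<noteq> {}"
proof -
  obtain i where "i \<in> clients" using clients_nonempty by blast
  then have "(0, 0, i, 0) \<in> samples" using E_pos H_pos by (simp add: samples_def)
  then show ?thesis by blast
qed

lemma integral_spath:
  fixes \<Phi> :: "(nat \<Rightarrow> nat \<Rightarrow> 'c \<Rightarrow> nat \<Rightarrow> 's) \<Rightarrow> real"
  assumes agree: "\<And>s s'. agree_on_samples s s' \<Longrightarrow> \<Phi> s = \<Phi> s'"
    and meas: "(\<lambda>w. \<Phi> (path w)) \<in> borel_measurable P"
  shows "(\<integral>\<omega>. \<Phi> (spath \<xi> \<omega>) \<partial>M) = (\<integral>w. \<Phi> (path w) \<partial>P)"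
proof -
  interpret M: prob_space M by (rule M_prob)
  let ?X = "\<lambda>(t, e, i, h). \<xi> t e i h"
  have "M.indep_vars (\<lambda>(t, e, i, h). D i) ?X samples"
    by (rule M.indep_vars_subset[OF samples_indep]) (auto simp: samples_def)
  then have indep: "M.indep_vars sample_law ?X samples"
    by (rule M.indep_vars_cong[THEN iffD1, rotated 3]) (auto simp: samples_def sample_law_client)
  have "(\<integral>\<omega>. \<Phi> (path (\<lambda>c\<in>samples. ?X c \<omega>)) \<partial>M) = (\<integral>w. \<Phi> (path w) \<partial>P)"
    using samples_distr meas
    by (intro M.integral_indep_vars_PiM[OF samples_nonempty indep])
       (auto simp: samples_def sample_law_client)
  moreover have "\<Phi> (path (\<lambda>c\<in>samples. ?X c \<omega>)) = \<Phi> (spath \<xi> \<omega>)" for \<omega>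
    by (intro agree) (auto simp: agree_on_samples_def path_def spath_def)
  ultimately show ?thesis by simp
qed

lemma agree_on_samples_before: "agree_on_samples s s' \<Longrightarrow> agree_before s s' T e h"
  unfolding agree_on_samples_def agree_before_def sample_before_def samples_def by auto

lemma agree_on_samples_XB_Suc: "agree_on_samples s s' \<Longrightarrow> XB s (Suc T) = XB s' (Suc T)"
  by (rule conjunct1[OF mtgc_outer_cong]) (use E_pos H_pos in \<open>auto simp: agree_on_samples_def samples_def\<close>)

lemma Dt_eq: "Dt G C N \<gamma> H E x0 M \<xi> T = (\<Sum>e<E. group_deviation e)"
proof -
  have "(\<integral>\<omega>. (norm (XH (spath \<xi> \<omega>) T e - XJ (spath \<xi> \<omega>) T e j))\<^sup>2 \<partial>M)
      = (\<integral>w. (norm (XH (path w) T e - XJ (path w) T e j))\<^sup>2 \<partial>P)" if "e < E" "j < N" for e j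
    using that
    by (intro integral_spath borel_measurable_integrable sq_integrableD(2)
        sq_integrable_diff sq_integrable_XH sq_integrable_XJ)
       (auto dest!: agree_on_samples_before[of _ _ e 0] simp: XH_agree XJ_agree)
  then show ?thesis
    unfolding Dt_def group_deviation_def avgN_def by simp
qed

lemma Qt_eq: "Qt G C N \<gamma> H E x0 M \<xi> T = (\<Sum>e<E. client_deviation e) / real H"
proof -
  have "(\<integral>\<omega>. (norm (XJ (spath \<xi> \<omega>) T e j - XL (spath \<xi> \<omega>) T e i h))\<^sup>2 \<partial>M)
      = (\<integral>w. (norm (XJ (path w) T e j - XL (path w) T e i h))\<^sup>2 \<partial>P)"
    if "e < E" "j < N" "i \<in> C j" "h < H" for e j i h
  proof (rule integral_spath)
    fix s s' assume agree: "agree_on_samples s s'"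
    have "i \<in> clients" using that C_subset_clients by auto
    then show "(norm (XJ s T e j - XL s T e i h))\<^sup>2 = (norm (XJ s' T e j - XL s' T e i h))\<^sup>2"
      using XJ_agree[OF agree_on_samples_before[OF agree]] XL_agree[OF agree_on_samples_before[OF agree]] that
      by simp
  next
    show "(\<lambda>w. (norm (XJ (path w) T e j - XL (path w) T e i h))\<^sup>2) \<in> borel_measurable P"
      using that C_subset_clients
      by (intro borel_measurable_integrable sq_integrableD(2) sq_integrable_diff
          sq_integrable_XJ sq_integrable_XL) auto
  qed
  then show ?thesis
    unfolding Qt_def client_deviation_def avgN_def avgC_def
    by (simp add: sum_divide_distrib sum_distrib_left mult_ac)
qed

lemma sampled_round_descent:
  "(\<integral>\<omega>. fglob C N F (XB (spath \<xi> \<omega>) (Suc T)) \<partial>M)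
     \<le> (\<integral>\<omega>. fglob C N F (XB (spath \<xi> \<omega>) T) \<partial>M)
        - \<gamma> * real H / 2 * (\<Sum>e<E. \<integral>\<omega>. (norm (gradglob C N gradF (XH (spath \<xi> \<omega>) T e)))\<^sup>2 \<partial>M)
        + \<gamma> * L\<^sup>2 * real H * (Qt G C N \<gamma> H E x0 M \<xi> T + Dt G C N \<gamma> H E x0 M \<xi> T)
        + \<gamma>\<^sup>2 * L * real E * real H * (1 / (real N)\<^sup>2) * (\<Sum>j<N. 1 / real (card (C j))) * \<sigma>\<^sup>2"
proof -
  have next_round: "(\<integral>\<omega>. fglob C N F (XB (spath \<xi> \<omega>) (Suc T)) \<partial>M) = (\<integral>w. fglob C N F (XB (path w) (Suc T)) \<partial>P)"
    using sq_integrable_XH[of T E]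
    by (intro integral_spath borel_measurable_integrable integrable_fglob)
       (auto simp: agree_on_samples_XB_Suc XH_E)
  have this_round: "(\<integral>\<omega>. fglob C N F (XB (spath \<xi> \<omega>) T) \<partial>M) = (\<integral>w. fglob C N F (XB (path w) T) \<partial>P)"
    using sq_integrable_round[of T]
    by (intro integral_spath borel_measurable_integrable integrable_fglob)
       (auto dest: agree_on_samples_before[of _ _ 0 0] simp: XB_agree)
  have "(\<integral>\<omega>. (norm (gradglob C N gradF (XH (spath \<xi> \<omega>) T e)))\<^sup>2 \<partial>M)
      = (\<integral>w. (norm (gradglob C N gradF (XH (path w) T e)))\<^sup>2 \<partial>P)" if e: "e < E" for e
  proof (rule integral_spath)
    fix s s' assume "agree_on_samples s s'"
    then show "(norm (gradglob C N gradF (XH s T e)))\<^sup>2 = (norm (gradglob C N gradF (XH s' T e)))\<^sup>2"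
      using XH_agree[OF agree_on_samples_before] e by simp
  qed (use e in \<open>intro borel_measurable_integrable sq_integrableD(2) sq_integrable_gradglob sq_integrable_XH, auto\<close>)
  then have grad: "(\<Sum>e<E. \<integral>\<omega>. (norm (gradglob C N gradF (XH (spath \<xi> \<omega>) T e)))\<^sup>2 \<partial>M)
      = (\<Sum>e<E. \<integral>w. (norm (gradglob C N gradF (XH (path w) T e)))\<^sup>2 \<partial>P)"
    by simp
  show ?thesis
    unfolding next_round this_round grad Qt_eq Dt_eq by (rule expected_round_descent)
qed

end

theorem lemmaC2p1:
  fixes F :: "'c \<Rightarrow> 'a::euclidean_space \<Rightarrow> real" and gradF :: "'c \<Rightarrow> 'a \<Rightarrow> 'a"
    and Fs :: "'c \<Rightarrow> 'a \<Rightarrow> 's \<Rightarrow> real" and G :: "'c \<Rightarrow> 'a \<Rightarrow> 's \<Rightarrow> 'a"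
    and D :: "'c \<Rightarrow> 's measure" and C :: "nat \<Rightarrow> 'c set"
    and N E H :: nat and \<gamma> L \<sigma> :: real and x0 :: 'a
    and M :: "'m measure" and \<xi> :: "nat \<Rightarrow> nat \<Rightarrow> 'c \<Rightarrow> nat \<Rightarrow> 'm \<Rightarrow> 's" and t :: nat
  assumes N_pos: "N \<ge> 1"
    and groups_fin: "\<forall>j<N. finite (C j) \<and> C j \<noteq> {}"
    and groups_disj: "\<forall>j<N. \<forall>j'<N. j \<noteq> j' \<longrightarrow> C j \<inter> C j' = {}"
    and E_pos: "E \<ge> 1" and H_pos: "H \<ge> 1" and gamma_pos: "\<gamma> > 0"
    and D_prob: "\<forall>i\<in>(\<Union>j<N. C j). prob_space (D i)"
    and stoch_loss: "\<forall>i\<in>(\<Union>j<N. C j). \<forall>x. integrable (D i) (Fs i x) \<and> F i x = (\<integral>z. Fs i x z \<partial>D i)"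
    and stoch_grad: "\<forall>i\<in>(\<Union>j<N. C j). \<forall>z\<in>space (D i). \<forall>x. GDERIV (\<lambda>x. Fs i x z) x :> G i x z"
    and G_meas: "\<forall>i\<in>(\<Union>j<N. C j). (\<lambda>p. G i (fst p) (snd p)) \<in> borel_measurable ((borel :: 'a measure) \<Otimes>\<^sub>M D i)"
    and A1_diff: "\<forall>i\<in>(\<Union>j<N. C j). \<forall>x. GDERIV (F i) x :> gradF i x"
    and A1_smooth: "\<forall>i\<in>(\<Union>j<N. C j). \<forall>x y. norm (gradF i x - gradF i y) \<le> L * norm (x - y)"
    and A2_unbiased: "\<forall>i\<in>(\<Union>j<N. C j). \<forall>x. integrable (D i) (G i x) \<and> (\<integral>z. G i x z \<partial>D i) = gradF i x"
    and A2_var: "\<forall>i\<in>(\<Union>j<N. C j). \<forall>x.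
                   (\<integral>\<^sup>+z. ennreal ((norm (G i x z - gradF i x))\<^sup>2) \<partial>D i) \<le> ennreal (\<sigma>\<^sup>2)"
    and step: "2 * real H * L * \<gamma> \<le> 1"
    and M_prob: "prob_space M"
    and samples_distr: "\<forall>t' e i h. i \<in> (\<Union>j<N. C j) \<and> e < E \<and> h < H \<longrightarrow>
                          \<xi> t' e i h \<in> measurable M (D i) \<and> distr M (D i) (\<xi> t' e i h) = D i"
    and samples_indep: "prob_space.indep_vars M (\<lambda>(t', e, i, h). D i) (\<lambda>(t', e, i, h). \<xi> t' e i h)
                          {(t', e, i, h). i \<in> (\<Union>j<N. C j) \<and> e < E \<and> h < H}"
  shows "(\<integral>\<omega>. fglob C N F (xbar G C N \<gamma> H E x0 (spath \<xi> \<omega>) (Suc t)) \<partial>M)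
     \<le> (\<integral>\<omega>. fglob C N F (xbar G C N \<gamma> H E x0 (spath \<xi> \<omega>) t) \<partial>M)
        - \<gamma> * real H / 2 * (\<Sum>e<E. \<integral>\<omega>. (norm (gradglob C N gradF (xhat G C N \<gamma> H E x0 (spath \<xi> \<omega>) t e)))\<^sup>2 \<partial>M)
        + \<gamma> * L\<^sup>2 * real H * (Qt G C N \<gamma> H E x0 M \<xi> t + Dt G C N \<gamma> H E x0 M \<xi> t)
        + \<gamma>\<^sup>2 * L * real E * real H * (1 / (real N)\<^sup>2) * (\<Sum>j<N. 1 / real (card (C j))) * \<sigma>\<^sup>2"
proof -
  have clients: "client_groups.clients C N = (\<Union>j<N. C j)"
    using N_pos groups_fin groups_disj by (intro client_groups.clients_def client_groups.intro)
  interpret mtgc_sampled C N G \<gamma> H E x0 F gradF D L \<sigma> t M \<xi>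
    by (intro mtgc_sampled.intro mtgc_stoch.intro mtgc.intro client_groups.intro mtgc_axioms.intro
        mtgc_stoch_axioms.intro mtgc_sampled_axioms.intro)
       (use assms in \<open>simp_all add: clients\<close>)
  show ?thesis by (rule sampled_round_descent)
qed

end
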